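(* Let $\mathbb{C}$ be an isostable squares category. For every $n\ge0$, the forgetful functor $U_n:S^{\square}_n\mathbb{C}\to\mathcal{H}_n\mathbb{C}$, sending an object $(A_{jk})$ to its top row $O=A_{00}\rightarrowtail A_{01}\rightarrowtail\cdots\rightarrowtail A_{0n}$, is an equivalence of categories.
   Context: A squares category is a flat double category (squares uniquely determined by their boundary; we say a boundary "is a square") with a distinguished object $O$ initial in the horizontal category $\mathcal{H}_{\mathbb{C}}$ (morphisms $\rightarrowtail$) and terminal in the vertical category $\mathcal{V}_{\mathbb{C}}$ (morphisms $\twoheadrightarrow$). A vertical $f:A\twoheadrightarrow B$ is a vertical weak equivalence if the boundary (top $O\rightarrowtail A$, left $\mathrm{id}_O$, right $f$, bottom $O\rightarrowtail B$) is a square; a horizontal $g:A\rightarrowtail B$ is a horizontal weak equivalence if the boundary (top $g$, left $A\twoheadrightarrow O$, right $B\twoheadrightarrow O$, bottom $\mathrm{id}_O$) is a square. Vertical natural transformations between double functors of flat double categories: vertical components $\tau_A$ with $(Ff,\tau_A,\tau_{A'},Gf)$ a square for each horizontal $f$ and commuting naturality squares in the vertical category; $\mathrm{Fun}^v$ is the functor category. With $\boxdot$ the flat double category generated by one square (corners $a,b,c,d$, horizontal $a\rightarrowtail b,c\rightarrowtail d$, vertical $a\twoheadrightarrow c,b\twoheadrightarrow d$), $i:\mathrm{span}\hookrightarrow\boxdot$ on $a\rightarrowtail b,a\twoheadrightarrow c$ and $j:\mathrm{cospan}\hookrightarrow\boxdot$ on $b\twoheadrightarrow d,c\rightarrowtail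 d$: a squares category is stable if (i) $i^*$ on $\mathrm{Fun}^v(-,\mathbb{C})$ has a section functor $s$, (ii) there is a natural transformation $w:si^*\Rightarrow\mathrm{id}$ with components the identity at $a,b,c$, (iii) $j^*$ has a section functor $t$, (iv) there is a natural transformation $u:tj^*\Rightarrow\mathrm{id}$ with components the identity at $b,c,d$ and a vertical weak equivalence at $a$. It is isostable if it is stable, its weak equivalences are invertible, and for every boundary with top $f:A\rightarrowtail B$, bottom $k:C\rightarrowtail D$ and vertical isomorphisms $g:A\twoheadrightarrow C$, $h:B\twoheadrightarrow D$, this boundary is a square iff the boundary with top $k$, left $g^{-1}$, right $h^{-1}$, bottom $f$ is a square. $S^{\square}_n\mathbb{C}$: objects are families $(A_{jk})_{0\le j\le k\le n}$ with $A_{jj}=O$, horizontal $A_{jk}\rightarrowtail A_{j,k+1}$, vertical $A_{jk}\twoheadrightarrow A_{j+1,k}$, each unit cell ($j<k<n$) a square; morphisms are families of vertical morphisms $A_{jk}\twoheadrightarrow A'_{jk}$ such that every cell formed with a horizontal generator is a square and every cell formed with a vertical generator commutes in $\mathcal{V}_{\mathbb{C}}$ (their components are vertical weak equivalences). $\mathcal{H}_n\mathbb{C}$ is the category whose objects are sequences $O\rightarrowtail A_1\rightarrowtail\cdots\rightarrowtail A_n$ of horizontal morphisms and whose morphisms are families of vertical weak equivalences $A_i\twoheadrightarrow A'_i$ (identity on $O$) such that each boundary $(A_i\rightarrowtail A_{i+1}, A_i\twoheadrightarrow A_i', A_{i+1}\twoheadrightarrow A'_{i+1}, A'_i\rightarrowtail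 A'_{i+1})$ is a square. *)

theory Defs
  imports Main
begin

section \<open>Categories (concrete, with carriers)\<close>

record ('o, 'a) cat =
  cObj  :: "'o set"
  cArr  :: "'a set"
  cDom  :: "'a \<Rightarrow> 'o"
  cCod  :: "'a \<Rightarrow> 'o"
  cId   :: "'o \<Rightarrow> 'a"
  cComp :: "'a \<Rightarrow> 'a \<Rightarrow> 'a"   (* cComp g f = g o f *)

definition is_category :: "('o, 'a) cat \<Rightarrow> bool" where
  "is_category K \<longleftrightarrow>
     (\<forall>x\<in>cObj K. cId K x \<in> cArr K \<and> cDom K (cId K x) = x \<and> cCod K (cId K x) = x) \<and>
     (\<forall>f\<in>cArr K. cDom K f \<in> cObj K \<and> cCod K f \<in> cObj K) \<and>
     (\<forall>f\<in>cArr K. \<forall>g\<in>cArr K. cCod K f = cDom K g \<longrightarrow>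
        cComp K g f \<in> cArr K \<and> cDom K (cComp K g f) = cDom K f \<and> cCod K (cComp K g f) = cCod K g) \<and>
     (\<forall>f\<in>cArr K. cComp K f (cId K (cDom K f)) = f \<and> cComp K (cId K (cCod K f)) f = f) \<and>
     (\<forall>f\<in>cArr K. \<forall>g\<in>cArr K. \<forall>h\<in>cArr K. cCod K f = cDom K g \<longrightarrow> cCod K g = cDom K h \<longrightarrow>
        cComp K h (cComp K g f) = cComp K (cComp K h g) f)"

definition cat_iso :: "('o, 'a) cat \<Rightarrow> 'a \<Rightarrow> bool" where
  "cat_iso K f \<longleftrightarrow> f \<in> cArr K \<and>
     (\<exists>g\<in>cArr K. cDom K g = cCod K f \<and> cCod K g = cDom K f \<and>
        cComp K g f = cId K (cDom K f) \<and> cComp K f g = cId K (cCod K f))"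

type_synonym ('o1, 'a1, 'o2, 'a2) functor_data = "('o1 \<Rightarrow> 'o2) \<times> ('a1 \<Rightarrow> 'a2)"

definition is_functor ::
  "('o1, 'a1) cat \<Rightarrow> ('o2, 'a2) cat \<Rightarrow> ('o1, 'a1, 'o2, 'a2) functor_data \<Rightarrow> bool" where
  "is_functor K L F \<longleftrightarrow>
     (\<forall>x\<in>cObj K. fst F x \<in> cObj L) \<and>
     (\<forall>f\<in>cArr K. snd F f \<in> cArr L \<and> cDom L (snd F f) = fst F (cDom K f)
                  \<and> cCod L (snd F f) = fst F (cCod K f)) \<and>
     (\<forall>x\<in>cObj K. snd F (cId K x) = cId L (fst F x)) \<and>
     (\<forall>f\<in>cArr K. \<forall>g\<in>cArr K. cCod K f = cDom K g \<longrightarrow>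
        snd F (cComp K g f) = cComp L (snd F g) (snd F f))"

definition fid :: "('o, 'a, 'o, 'a) functor_data" where
  "fid = (\<lambda>x. x, \<lambda>f. f)"

definition fcomp :: "('o2, 'a2, 'o3, 'a3) functor_data \<Rightarrow> ('o1, 'a1, 'o2, 'a2) functor_data
                     \<Rightarrow> ('o1, 'a1, 'o3, 'a3) functor_data" where
  "fcomp G F = (fst G \<circ> fst F, snd G \<circ> snd F)"

definition is_nat_trans ::
  "('o1, 'a1) cat \<Rightarrow> ('o2, 'a2) cat \<Rightarrow> ('o1, 'a1, 'o2, 'a2) functor_data
     \<Rightarrow> ('o1, 'a1, 'o2, 'a2) functor_data \<Rightarrow> ('o1 \<Rightarrow> 'a2) \<Rightarrow> bool" where
  "is_nat_trans K L F G \<eta> \<longleftrightarrow>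
     (\<forall>x\<in>cObj K. \<eta> x \<in> cArr L \<and> cDom L (\<eta> x) = fst F x \<and> cCod L (\<eta> x) = fst G x) \<and>
     (\<forall>f\<in>cArr K. cComp L (\<eta> (cCod K f)) (snd F f) = cComp L (snd G f) (\<eta> (cDom K f)))"

definition is_nat_iso ::
  "('o1, 'a1) cat \<Rightarrow> ('o2, 'a2) cat \<Rightarrow> ('o1, 'a1, 'o2, 'a2) functor_data
     \<Rightarrow> ('o1, 'a1, 'o2, 'a2) functor_data \<Rightarrow> ('o1 \<Rightarrow> 'a2) \<Rightarrow> bool" where
  "is_nat_iso K L F G \<eta> \<longleftrightarrow> is_nat_trans K L F G \<eta> \<and> (\<forall>x\<in>cObj K. cat_iso L (\<eta> x))"

definition equivalence_of_categories ::
  "('o1, 'a1) cat \<Rightarrow> ('o2, 'a2) cat \<Rightarrow> ('o1, 'a1, 'o2, 'a2) functor_data \<Rightarrow> bool" where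
  "equivalence_of_categories K L F \<longleftrightarrow> is_functor K L F \<and>
     (\<exists>G. is_functor L K G \<and>
        (\<exists>\<eta>. is_nat_iso K K fid (fcomp G F) \<eta>) \<and>
        (\<exists>\<epsilon>. is_nat_iso L L (fcomp F G) fid \<epsilon>))"

section \<open>Flat double categories\<close>

record ('o, 'h, 'v) dblcat =
  dObj  :: "'o set"
  hArr  :: "'h set"
  hDom  :: "'h \<Rightarrow> 'o"
  hCod  :: "'h \<Rightarrow> 'o"
  hId   :: "'o \<Rightarrow> 'h"
  hComp :: "'h \<Rightarrow> 'h \<Rightarrow> 'h"
  vArr  :: "'v set"
  vDom  :: "'v \<Rightarrow> 'o"
  vCod  :: "'v \<Rightarrow> 'o"
  vId   :: "'o \<Rightarrow> 'v"
  vComp :: "'v \<Rightarrow> 'v \<Rightarrow> 'v"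
  Sq    :: "'h \<Rightarrow> 'v \<Rightarrow> 'v \<Rightarrow> 'h \<Rightarrow> bool"  (* Sq top left right bottom *)

definition Hcat :: "('o, 'h, 'v) dblcat \<Rightarrow> ('o, 'h) cat" where
  "Hcat C = \<lparr>cObj = dObj C, cArr = hArr C, cDom = hDom C, cCod = hCod C,
             cId = hId C, cComp = hComp C\<rparr>"

definition Vcat :: "('o, 'h, 'v) dblcat \<Rightarrow> ('o, 'v) cat" where
  "Vcat C = \<lparr>cObj = dObj C, cArr = vArr C, cDom = vDom C, cCod = vCod C,
             cId = vId C, cComp = vComp C\<rparr>"

text \<open>A flat double category: squares are determined by their boundary, so they are
  encoded by the predicate Sq on boundaries; Sq must be closed under horizontal and
  vertical pasting and contain the identity squares.\<close>
definition flat_double_category :: "('o, 'h, 'v) dblcat \<Rightarrow> bool" where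
  "flat_double_category C \<longleftrightarrow>
     is_category (Hcat C) \<and> is_category (Vcat C) \<and>
     (\<forall>f g h k. Sq C f g h k \<longrightarrow>
        f \<in> hArr C \<and> k \<in> hArr C \<and> g \<in> vArr C \<and> h \<in> vArr C \<and>
        hDom C f = vDom C g \<and> hCod C f = vDom C h \<and>
        hDom C k = vCod C g \<and> hCod C k = vCod C h) \<and>
     (\<forall>f\<in>hArr C. Sq C f (vId C (hDom C f)) (vId C (hCod C f)) f) \<and>
     (\<forall>g\<in>vArr C. Sq C (hId C (vDom C g)) g g (hId C (vCod C g))) \<and>
     (\<forall>f g h k f' h' k'. Sq C f g h k \<longrightarrow> Sq C f' h h' k' \<longrightarrow>
        Sq C (hComp C f' f) g h' (hComp C k' k)) \<and>
     (\<forall>f g h k g' h' k'. Sq C f g h k \<longrightarrow> Sq C k g' h' k' \<longrightarrow>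
        Sq C f (vComp C g' g) (vComp C h' h) k')"

section \<open>Squares categories\<close>

definition squares_category :: "('o, 'h, 'v) dblcat \<Rightarrow> 'o \<Rightarrow> bool" where
  "squares_category C Z \<longleftrightarrow> flat_double_category C \<and> Z \<in> dObj C \<and>
     (\<forall>A\<in>dObj C. \<exists>!h. h \<in> hArr C \<and> hDom C h = Z \<and> hCod C h = A) \<and>
     (\<forall>A\<in>dObj C. \<exists>!v. v \<in> vArr C \<and> vDom C v = A \<and> vCod C v = Z)"

definition hinit :: "('o, 'h, 'v) dblcat \<Rightarrow> 'o \<Rightarrow> 'o \<Rightarrow> 'h" where
  "hinit C Z A = (THE h. h \<in> hArr C \<and> hDom C h = Z \<and> hCod C h = A)"

definition vterm :: "('o, 'h, 'v) dblcat \<Rightarrow> 'o \<Rightarrow> 'o \<Rightarrow> 'v" where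
  "vterm C Z A = (THE v. v \<in> vArr C \<and> vDom C v = A \<and> vCod C v = Z)"

definition vweq :: "('o, 'h, 'v) dblcat \<Rightarrow> 'o \<Rightarrow> 'v \<Rightarrow> bool" where
  "vweq C Z f \<longleftrightarrow> f \<in> vArr C \<and>
     Sq C (hinit C Z (vDom C f)) (vId C Z) f (hinit C Z (vCod C f))"

definition hweq :: "('o, 'h, 'v) dblcat \<Rightarrow> 'o \<Rightarrow> 'h \<Rightarrow> bool" where
  "hweq C Z g \<longleftrightarrow> g \<in> hArr C \<and>
     Sq C g (vterm C Z (hDom C g)) (vterm C Z (hCod C g)) (hId C Z)"

section \<open>Vertical functor categories Fun^v(span, C), Fun^v(square, C), Fun^v(cospan, C)\<close>

text \<open>A double functor span -> C is a pair (f, g) with f horizontal, g vertical and common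
  domain (corner a). A vertical transformation is a triple of vertical components at
  a, b, c.\<close>

definition spanObj :: "('o, 'h, 'v) dblcat \<Rightarrow> ('h \<times> 'v) set" where
  "spanObj C = {(f, g). f \<in> hArr C \<and> g \<in> vArr C \<and> hDom C f = vDom C g}"

definition spanMor :: "('o, 'h, 'v) dblcat \<Rightarrow> 'h \<times> 'v \<Rightarrow> 'h \<times> 'v \<Rightarrow> 'v \<times> 'v \<times> 'v \<Rightarrow> bool" where
  "spanMor C X Y t = (case X of (f, g) \<Rightarrow> case Y of (f', g') \<Rightarrow> case t of (ta, tb, tc) \<Rightarrow>
     ta \<in> vArr C \<and> vDom C ta = hDom C f \<and> vCod C ta = hDom C f' \<and>
     tb \<in> vArr C \<and> vDom C tb = hCod C f \<and> vCod C tb = hCod C f' \<and>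
     tc \<in> vArr C \<and> vDom C tc = vCod C g \<and> vCod C tc = vCod C g' \<and>
     Sq C f ta tb f' \<and> vComp C tc g = vComp C g' ta)"

definition FunSpan :: "('o, 'h, 'v) dblcat \<Rightarrow>
    ('h \<times> 'v, ('h \<times> 'v) \<times> ('h \<times> 'v) \<times> ('v \<times> 'v \<times> 'v)) cat" where
  "FunSpan C = \<lparr>
     cObj = spanObj C,
     cArr = {(X, Y, t). X \<in> spanObj C \<and> Y \<in> spanObj C \<and> spanMor C X Y t},
     cDom = (\<lambda>(X, Y, t). X),
     cCod = (\<lambda>(X, Y, t). Y),
     cId = (\<lambda>(f, g). ((f, g), (f, g), (vId C (hDom C f), vId C (hCod C f), vId C (vCod C g)))),
     cComp = (\<lambda>(Y, Z, (sa, sb, sc)) (X, Y', (ta, tb, tc)).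
                (X, Z, (vComp C sa ta, vComp C sb tb, vComp C sc tc)))\<rparr>"

text \<open>A double functor from the free square to C is a square (f, g, h, k) of C
  (top f : a -> b, left g : a -> c, right h : b -> d, bottom k : c -> d).\<close>

definition sqObj :: "('o, 'h, 'v) dblcat \<Rightarrow> ('h \<times> 'v \<times> 'v \<times> 'h) set" where
  "sqObj C = {(f, g, h, k). Sq C f g h k}"

definition sqMor :: "('o, 'h, 'v) dblcat \<Rightarrow> 'h \<times> 'v \<times> 'v \<times> 'h \<Rightarrow> 'h \<times> 'v \<times> 'v \<times> 'h
                      \<Rightarrow> 'v \<times> 'v \<times> 'v \<times> 'v \<Rightarrow> bool" where
  "sqMor C X Y t = (case X of (f, g, h, k) \<Rightarrow> case Y of (f', g', h', k') \<Rightarrow>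
     case t of (ta, tb, tc, td) \<Rightarrow>
     ta \<in> vArr C \<and> vDom C ta = hDom C f \<and> vCod C ta = hDom C f' \<and>
     tb \<in> vArr C \<and> vDom C tb = hCod C f \<and> vCod C tb = hCod C f' \<and>
     tc \<in> vArr C \<and> vDom C tc = hDom C k \<and> vCod C tc = hDom C k' \<and>
     td \<in> vArr C \<and> vDom C td = hCod C k \<and> vCod C td = hCod C k' \<and>
     Sq C f ta tb f' \<and> Sq C k tc td k' \<and>
     vComp C tc g = vComp C g' ta \<and> vComp C td h = vComp C h' tb)"

definition FunSq :: "('o, 'h, 'v) dblcat \<Rightarrow>
    ('h \<times> 'v \<times> 'v \<times> 'h,
     ('h \<times> 'v \<times> 'v \<times> 'h) \<times> ('h \<times> 'v \<times> 'v \<times> 'h) \<times> ('v \<times> 'v \<times> 'v \<times> 'v)) cat" where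
  "FunSq C = \<lparr>
     cObj = sqObj C,
     cArr = {(X, Y, t). X \<in> sqObj C \<and> Y \<in> sqObj C \<and> sqMor C X Y t},
     cDom = (\<lambda>(X, Y, t). X),
     cCod = (\<lambda>(X, Y, t). Y),
     cId = (\<lambda>(f, g, h, k). ((f, g, h, k), (f, g, h, k),
              (vId C (hDom C f), vId C (hCod C f), vId C (hDom C k), vId C (hCod C k)))),
     cComp = (\<lambda>(Y, Z, (sa, sb, sc, sd)) (X, Y', (ta, tb, tc, td)).
                (X, Z, (vComp C sa ta, vComp C sb tb, vComp C sc tc, vComp C sd td)))\<rparr>"

text \<open>A double functor cospan -> C is a pair (h, k), h : b -> d vertical,
  k : c -> d horizontal; transformations have components at b, c, d.\<close>

definition cospanObj :: "('o, 'h, 'v) dblcat \<Rightarrow> ('v \<times> 'h) set" where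
  "cospanObj C = {(h, k). h \<in> vArr C \<and> k \<in> hArr C \<and> vCod C h = hCod C k}"

definition cospanMor :: "('o, 'h, 'v) dblcat \<Rightarrow> 'v \<times> 'h \<Rightarrow> 'v \<times> 'h \<Rightarrow> 'v \<times> 'v \<times> 'v \<Rightarrow> bool" where
  "cospanMor C X Y t = (case X of (h, k) \<Rightarrow> case Y of (h', k') \<Rightarrow> case t of (tb, tc, td) \<Rightarrow>
     tb \<in> vArr C \<and> vDom C tb = vDom C h \<and> vCod C tb = vDom C h' \<and>
     tc \<in> vArr C \<and> vDom C tc = hDom C k \<and> vCod C tc = hDom C k' \<and>
     td \<in> vArr C \<and> vDom C td = hCod C k \<and> vCod C td = hCod C k' \<and>
     Sq C k tc td k' \<and> vComp C td h = vComp C h' tb)"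

definition FunCospan :: "('o, 'h, 'v) dblcat \<Rightarrow>
    ('v \<times> 'h, ('v \<times> 'h) \<times> ('v \<times> 'h) \<times> ('v \<times> 'v \<times> 'v)) cat" where
  "FunCospan C = \<lparr>
     cObj = cospanObj C,
     cArr = {(X, Y, t). X \<in> cospanObj C \<and> Y \<in> cospanObj C \<and> cospanMor C X Y t},
     cDom = (\<lambda>(X, Y, t). X),
     cCod = (\<lambda>(X, Y, t). Y),
     cId = (\<lambda>(h, k). ((h, k), (h, k), (vId C (vDom C h), vId C (hDom C k), vId C (hCod C k)))),
     cComp = (\<lambda>(Y, Z, (sb, sc, sd)) (X, Y', (tb, tc, td)).
                (X, Z, (vComp C sb tb, vComp C sc tc, vComp C sd td)))\<rparr>"

definition istar_o :: "'h \<times> 'v \<times> 'v \<times> 'h \<Rightarrow> 'h \<times> 'v" where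
  "istar_o X = (case X of (f, g, h, k) \<Rightarrow> (f, g))"

definition istar :: "('h \<times> 'v \<times> 'v \<times> 'h,
     ('h \<times> 'v \<times> 'v \<times> 'h) \<times> ('h \<times> 'v \<times> 'v \<times> 'h) \<times> ('v \<times> 'v \<times> 'v \<times> 'v),
     'h \<times> 'v, ('h \<times> 'v) \<times> ('h \<times> 'v) \<times> ('v \<times> 'v \<times> 'v)) functor_data" where
  "istar = (istar_o, \<lambda>(X, Y, (ta, tb, tc, td)). (istar_o X, istar_o Y, (ta, tb, tc)))"

definition jstar_o :: "'h \<times> 'v \<times> 'v \<times> 'h \<Rightarrow> 'v \<times> 'h" where
  "jstar_o X = (case X of (f, g, h, k) \<Rightarrow> (h, k))"

definition jstar :: "('h \<times> 'v \<times> 'v \<times> 'h,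
     ('h \<times> 'v \<times> 'v \<times> 'h) \<times> ('h \<times> 'v \<times> 'v \<times> 'h) \<times> ('v \<times> 'v \<times> 'v \<times> 'v),
     'v \<times> 'h, ('v \<times> 'h) \<times> ('v \<times> 'h) \<times> ('v \<times> 'v \<times> 'v)) functor_data" where
  "jstar = (jstar_o, \<lambda>(X, Y, (ta, tb, tc, td)). (jstar_o X, jstar_o Y, (tb, tc, td)))"

definition compA :: "'x \<times> 'y \<times> ('v \<times> 'v \<times> 'v \<times> 'v) \<Rightarrow> 'v" where
  "compA \<phi> = (case \<phi> of (X, Y, (ta, tb, tc, td)) \<Rightarrow> ta)"
definition compB :: "'x \<times> 'y \<times> ('v \<times> 'v \<times> 'v \<times> 'v) \<Rightarrow> 'v" where
  "compB \<phi> = (case \<phi> of (X, Y, (ta, tb, tc, td)) \<Rightarrow> tb)"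
definition compC :: "'x \<times> 'y \<times> ('v \<times> 'v \<times> 'v \<times> 'v) \<Rightarrow> 'v" where
  "compC \<phi> = (case \<phi> of (X, Y, (ta, tb, tc, td)) \<Rightarrow> tc)"
definition compD :: "'x \<times> 'y \<times> ('v \<times> 'v \<times> 'v \<times> 'v) \<Rightarrow> 'v" where
  "compD \<phi> = (case \<phi> of (X, Y, (ta, tb, tc, td)) \<Rightarrow> td)"

definition cornerA :: "('o, 'h, 'v) dblcat \<Rightarrow> 'h \<times> 'v \<times> 'v \<times> 'h \<Rightarrow> 'o" where
  "cornerA C X = (case X of (f, g, h, k) \<Rightarrow> hDom C f)"
definition cornerB :: "('o, 'h, 'v) dblcat \<Rightarrow> 'h \<times> 'v \<times> 'v \<times> 'h \<Rightarrow> 'o" where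
  "cornerB C X = (case X of (f, g, h, k) \<Rightarrow> hCod C f)"
definition cornerC :: "('o, 'h, 'v) dblcat \<Rightarrow> 'h \<times> 'v \<times> 'v \<times> 'h \<Rightarrow> 'o" where
  "cornerC C X = (case X of (f, g, h, k) \<Rightarrow> hDom C k)"
definition cornerD :: "('o, 'h, 'v) dblcat \<Rightarrow> 'h \<times> 'v \<times> 'v \<times> 'h \<Rightarrow> 'o" where
  "cornerD C X = (case X of (f, g, h, k) \<Rightarrow> hCod C k)"

section \<open>Stable and isostable squares categories\<close>

definition stable :: "('o, 'h, 'v) dblcat \<Rightarrow> 'o \<Rightarrow> bool" where
  "stable C Z \<longleftrightarrow> squares_category C Z \<and>
     (\<exists>s. is_functor (FunSpan C) (FunSq C) s \<and>
        (\<forall>X\<in>cObj (FunSpan C). fst istar (fst s X) = X) \<and>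
        (\<forall>\<phi>\<in>cArr (FunSpan C). snd istar (snd s \<phi>) = \<phi>) \<and>
        (\<exists>w. is_nat_trans (FunSq C) (FunSq C) (fcomp s istar) fid w \<and>
           (\<forall>X\<in>cObj (FunSq C).
              compA (w X) = vId C (cornerA C X) \<and>
              compB (w X) = vId C (cornerB C X) \<and>
              compC (w X) = vId C (cornerC C X)))) \<and>
     (\<exists>t. is_functor (FunCospan C) (FunSq C) t \<and>
        (\<forall>X\<in>cObj (FunCospan C). fst jstar (fst t X) = X) \<and>
        (\<forall>\<phi>\<in>cArr (FunCospan C). snd jstar (snd t \<phi>) = \<phi>) \<and>
        (\<exists>u. is_nat_trans (FunSq C) (FunSq C) (fcomp t jstar) fid u \<and>
           (\<forall>X\<in>cObj (FunSq C).
              vweq C Z (compA (u X)) \<and>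
              compB (u X) = vId C (cornerB C X) \<and>
              compC (u X) = vId C (cornerC C X) \<and>
              compD (u X) = vId C (cornerD C X))))"

definition isostable :: "('o, 'h, 'v) dblcat \<Rightarrow> 'o \<Rightarrow> bool" where
  "isostable C Z \<longleftrightarrow> stable C Z \<and>
     (\<forall>f. vweq C Z f \<longrightarrow> cat_iso (Vcat C) f) \<and>
     (\<forall>g. hweq C Z g \<longrightarrow> cat_iso (Hcat C) g) \<and>
     (\<forall>f k g h g' h'.
        f \<in> hArr C \<longrightarrow> k \<in> hArr C \<longrightarrow> g \<in> vArr C \<longrightarrow> h \<in> vArr C \<longrightarrow>
        vDom C g = hDom C f \<longrightarrow> vCod C g = hDom C k \<longrightarrow>
        vDom C h = hCod C f \<longrightarrow> vCod C h = hCod C k \<longrightarrow>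
        g' \<in> vArr C \<longrightarrow> vDom C g' = vCod C g \<longrightarrow> vCod C g' = vDom C g \<longrightarrow>
        vComp C g' g = vId C (vDom C g) \<longrightarrow> vComp C g g' = vId C (vCod C g) \<longrightarrow>
        h' \<in> vArr C \<longrightarrow> vDom C h' = vCod C h \<longrightarrow> vCod C h' = vDom C h \<longrightarrow>
        vComp C h' h = vId C (vDom C h) \<longrightarrow> vComp C h h' = vId C (vCod C h) \<longrightarrow>
        (Sq C f g h k \<longleftrightarrow> Sq C k g' h' f))"

section \<open>The categories S^square_n C and H_n C, and the forgetful functor\<close>

text \<open>Objects of S_n: triples (A, Ah, Av) where A j k is the object at position (j,k)
  (0 \<le> j \<le> k \<le> n), Ah j k : A j k \<rightarrowtail> A j (k+1) (j \<le> k < n) and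
  Av j k : A j k \<twoheadrightarrow> A (j+1) k (j < k \<le> n). Outside these index ranges the
  data is undefined (so that objects are determined by their actual data).\<close>

type_synonym ('o, 'h, 'v) sobj = "(nat \<Rightarrow> nat \<Rightarrow> 'o) \<times> (nat \<Rightarrow> nat \<Rightarrow> 'h) \<times> (nat \<Rightarrow> nat \<Rightarrow> 'v)"

definition is_sobj :: "('o, 'h, 'v) dblcat \<Rightarrow> 'o \<Rightarrow> nat \<Rightarrow> ('o, 'h, 'v) sobj \<Rightarrow> bool" where
  "is_sobj C Z n X = (case X of (A, Ah, Av) \<Rightarrow>
     (\<forall>j k. \<not> (j \<le> k \<and> k \<le> n) \<longrightarrow> A j k = undefined) \<and>
     (\<forall>j k. \<not> (j \<le> k \<and> k < n) \<longrightarrow> Ah j k = undefined) \<and>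
     (\<forall>j k. \<not> (j < k \<and> k \<le> n) \<longrightarrow> Av j k = undefined) \<and>
     (\<forall>j k. j \<le> k \<and> k \<le> n \<longrightarrow> A j k \<in> dObj C) \<and>
     (\<forall>j \<le> n. A j j = Z) \<and>
     (\<forall>j k. j \<le> k \<and> k < n \<longrightarrow>
        Ah j k \<in> hArr C \<and> hDom C (Ah j k) = A j k \<and> hCod C (Ah j k) = A j (Suc k)) \<and>
     (\<forall>j k. j < k \<and> k \<le> n \<longrightarrow>
        Av j k \<in> vArr C \<and> vDom C (Av j k) = A j k \<and> vCod C (Av j k) = A (Suc j) k) \<and>
     (\<forall>j k. j < k \<and> k < n \<longrightarrow>
        Sq C (Ah j k) (Av j k) (Av j (Suc k)) (Ah (Suc j) k)))"

definition is_smor :: "('o, 'h, 'v) dblcat \<Rightarrow> 'o \<Rightarrow> nat \<Rightarrow> ('o, 'h, 'v) sobj \<Rightarrow> ('o, 'h, 'v) sobj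
                        \<Rightarrow> (nat \<Rightarrow> nat \<Rightarrow> 'v) \<Rightarrow> bool" where
  "is_smor C Z n X Y \<phi> = (case X of (A, Ah, Av) \<Rightarrow> case Y of (B, Bh, Bv) \<Rightarrow>
     (\<forall>j k. \<not> (j \<le> k \<and> k \<le> n) \<longrightarrow> \<phi> j k = undefined) \<and>
     (\<forall>j k. j \<le> k \<and> k \<le> n \<longrightarrow>
        \<phi> j k \<in> vArr C \<and> vDom C (\<phi> j k) = A j k \<and> vCod C (\<phi> j k) = B j k \<and>
        vweq C Z (\<phi> j k)) \<and>
     (\<forall>j k. j \<le> k \<and> k < n \<longrightarrow> Sq C (Ah j k) (\<phi> j k) (\<phi> j (Suc k)) (Bh j k)) \<and>
     (\<forall>j k. j < k \<and> k \<le> n \<longrightarrow>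
        vComp C (\<phi> (Suc j) k) (Av j k) = vComp C (Bv j k) (\<phi> j k)))"

definition SCat :: "('o, 'h, 'v) dblcat \<Rightarrow> 'o \<Rightarrow> nat \<Rightarrow>
    (('o, 'h, 'v) sobj, ('o, 'h, 'v) sobj \<times> ('o, 'h, 'v) sobj \<times> (nat \<Rightarrow> nat \<Rightarrow> 'v)) cat" where
  "SCat C Z n = \<lparr>
     cObj = {X. is_sobj C Z n X},
     cArr = {(X, Y, \<phi>). is_sobj C Z n X \<and> is_sobj C Z n Y \<and> is_smor C Z n X Y \<phi>},
     cDom = (\<lambda>(X, Y, \<phi>). X),
     cCod = (\<lambda>(X, Y, \<phi>). Y),
     cId = (\<lambda>X. (X, X, \<lambda>j k. if j \<le> k \<and> k \<le> n then vId C (fst X j k) else undefined)),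
     cComp = (\<lambda>(Y, Z, \<psi>) (X, Y', \<phi>).
                (X, Z, \<lambda>j k. if j \<le> k \<and> k \<le> n then vComp C (\<psi> j k) (\<phi> j k) else undefined))\<rparr>"

type_synonym ('o, 'h) hobj = "(nat \<Rightarrow> 'o) \<times> (nat \<Rightarrow> 'h)"

definition is_hobj :: "('o, 'h, 'v) dblcat \<Rightarrow> 'o \<Rightarrow> nat \<Rightarrow> ('o, 'h) hobj \<Rightarrow> bool" where
  "is_hobj C Z n X = (case X of (A, a) \<Rightarrow>
     (\<forall>i. \<not> i \<le> n \<longrightarrow> A i = undefined) \<and>
     (\<forall>i. \<not> i < n \<longrightarrow> a i = undefined) \<and>
     A 0 = Z \<and>
     (\<forall>i \<le> n. A i \<in> dObj C) \<and>
     (\<forall>i < n. a i \<in> hArr C \<and> hDom C (a i) = A i \<and> hCod C (a i) = A (Suc i)))"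

definition is_hmor :: "('o, 'h, 'v) dblcat \<Rightarrow> 'o \<Rightarrow> nat \<Rightarrow> ('o, 'h) hobj \<Rightarrow> ('o, 'h) hobj
                        \<Rightarrow> (nat \<Rightarrow> 'v) \<Rightarrow> bool" where
  "is_hmor C Z n X Y \<phi> = (case X of (A, a) \<Rightarrow> case Y of (B, b) \<Rightarrow>
     (\<forall>i. \<not> i \<le> n \<longrightarrow> \<phi> i = undefined) \<and>
     (\<forall>i \<le> n. vweq C Z (\<phi> i) \<and> vDom C (\<phi> i) = A i \<and> vCod C (\<phi> i) = B i) \<and>
     \<phi> 0 = vId C Z \<and>
     (\<forall>i < n. Sq C (a i) (\<phi> i) (\<phi> (Suc i)) (b i)))"

definition HCat :: "('o, 'h, 'v) dblcat \<Rightarrow> 'o \<Rightarrow> nat \<Rightarrow>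
    (('o, 'h) hobj, ('o, 'h) hobj \<times> ('o, 'h) hobj \<times> (nat \<Rightarrow> 'v)) cat" where
  "HCat C Z n = \<lparr>
     cObj = {X. is_hobj C Z n X},
     cArr = {(X, Y, \<phi>). is_hobj C Z n X \<and> is_hobj C Z n Y \<and> is_hmor C Z n X Y \<phi>},
     cDom = (\<lambda>(X, Y, \<phi>). X),
     cCod = (\<lambda>(X, Y, \<phi>). Y),
     cId = (\<lambda>X. (X, X, \<lambda>i. if i \<le> n then vId C (fst X i) else undefined)),
     cComp = (\<lambda>(Y, Z, \<psi>) (X, Y', \<phi>).
                (X, Z, \<lambda>i. if i \<le> n then vComp C (\<psi> i) (\<phi> i) else undefined))\<rparr>"

definition U_obj :: "nat \<Rightarrow> ('o, 'h, 'v) sobj \<Rightarrow> ('o, 'h) hobj" where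
  "U_obj n X = (case X of (A, Ah, Av) \<Rightarrow>
     (\<lambda>i. if i \<le> n then A 0 i else undefined, \<lambda>i. if i < n then Ah 0 i else undefined))"

definition U_arr :: "nat \<Rightarrow> ('o, 'h, 'v) sobj \<times> ('o, 'h, 'v) sobj \<times> (nat \<Rightarrow> nat \<Rightarrow> 'v)
                     \<Rightarrow> ('o, 'h) hobj \<times> ('o, 'h) hobj \<times> (nat \<Rightarrow> 'v)" where
  "U_arr n F = (case F of (X, Y, \<phi>) \<Rightarrow>
     (U_obj n X, U_obj n Y, \<lambda>i. if i \<le> n then \<phi> 0 i else undefined))"

definition U_functor where
  "U_functor n = (U_obj n, U_arr n)"

end

theory Submission
  imports Defs
begin

text \<open>Stability provides a functorial filler \<open>s\<close> of spans by squares and a comparison \<open>w\<close> from the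
  filler of a span to any square on it. Isostability makes the component of the comparison at the
  fourth corner invertible and allows us to flip its square, so a morphism of squares is determined
  by, and can always be built from, its restriction to the span. Applied unit square by unit square
  down the staircase, this shows that \<open>U\<^sub>n\<close> is fully faithful; filling the staircase below a given
  top row with \<open>s\<close> shows that \<open>U\<^sub>n\<close> is surjective on objects. A fully faithful functor that is
  surjective on objects is an equivalence.\<close>

section \<open>Categories and equivalences\<close>

lemma
  assumes "is_category K"
  shows category_id: "x \<in> cObj K \<Longrightarrow> cId K x \<in> cArr K \<and> cDom K (cId K x) = x \<and> cCod K (cId K x) = x"
    and category_dom_cod: "f \<in> cArr K \<Longrightarrow> cDom K f \<in> cObj K \<and> cCod K f \<in> cObj K"
    and category_comp: "f \<in> cArr K \<Longrightarrow> g \<in> cArr K \<Longrightarrow> cCod K f = cDom K g \<Longrightarrow>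
      cComp K g f \<in> cArr K \<and> cDom K (cComp K g f) = cDom K f \<and> cCod K (cComp K g f) = cCod K g"
    and category_unit: "f \<in> cArr K \<Longrightarrow> cComp K f (cId K (cDom K f)) = f \<and> cComp K (cId K (cCod K f)) f = f"
    and category_assoc: "f \<in> cArr K \<Longrightarrow> g \<in> cArr K \<Longrightarrow> h \<in> cArr K \<Longrightarrow> cCod K f = cDom K g \<Longrightarrow>
      cCod K g = cDom K h \<Longrightarrow> cComp K h (cComp K g f) = cComp K (cComp K h g) f"
  using assms unfolding is_category_def by blast+

lemma
  assumes "is_functor K L F"
  shows functor_obj: "x \<in> cObj K \<Longrightarrow> fst F x \<in> cObj L"
    and functor_arr: "f \<in> cArr K \<Longrightarrow>
      snd F f \<in> cArr L \<and> cDom L (snd F f) = fst F (cDom K f) \<and> cCod L (snd F f) = fst F (cCod K f)"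
    and functor_id: "x \<in> cObj K \<Longrightarrow> snd F (cId K x) = cId L (fst F x)"
    and functor_comp: "f \<in> cArr K \<Longrightarrow> g \<in> cArr K \<Longrightarrow> cCod K f = cDom K g \<Longrightarrow>
      snd F (cComp K g f) = cComp L (snd F g) (snd F f)"
  using assms unfolding is_functor_def by blast+

lemma category_id_comp_id: "is_category K \<Longrightarrow> x \<in> cObj K \<Longrightarrow> cComp K (cId K x) (cId K x) = cId K x"
  using category_id category_unit by metis

lemma is_category_of_families:
  assumes "cObj K = {X. P X}" and "cArr K = {(X, Y, \<phi>). P X \<and> P Y \<and> M X Y \<phi>}"
    and "cDom K = (\<lambda>(X, Y, \<phi>). X)" and "cCod K = (\<lambda>(X, Y, \<phi>). Y)"
    and "cId K = (\<lambda>X. (X, X, I X))" and "cComp K = (\<lambda>(Y, W, \<psi>) (X, Y', \<phi>). (X, W, Comp \<psi> \<phi>))"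
    and "\<And>X. P X \<Longrightarrow> M X X (I X)"
    and "\<And>X Y W \<phi> \<psi>. P X \<Longrightarrow> P Y \<Longrightarrow> P W \<Longrightarrow> M X Y \<phi> \<Longrightarrow> M Y W \<psi> \<Longrightarrow> M X W (Comp \<psi> \<phi>)"
    and "\<And>X Y \<phi>. M X Y \<phi> \<Longrightarrow> Comp \<phi> (I X) = \<phi> \<and> Comp (I Y) \<phi> = \<phi>"
    and "\<And>X Y W V \<phi> \<psi> \<chi>. M X Y \<phi> \<Longrightarrow> M Y W \<psi> \<Longrightarrow> M W V \<chi> \<Longrightarrow>
      Comp \<chi> (Comp \<psi> \<phi>) = Comp (Comp \<chi> \<psi>) \<phi>"
  shows "is_category K"
  using assms unfolding is_category_def by auto

definition faithful_functor :: "('o1, 'a1) cat \<Rightarrow> ('o1, 'a1, 'o2, 'a2) functor_data \<Rightarrow> bool" where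
  "faithful_functor K F \<longleftrightarrow> (\<forall>f\<in>cArr K. \<forall>f'\<in>cArr K.
     cDom K f = cDom K f' \<longrightarrow> cCod K f = cCod K f' \<longrightarrow> snd F f = snd F f' \<longrightarrow> f = f')"

definition full_functor ::
  "('o1, 'a1) cat \<Rightarrow> ('o2, 'a2) cat \<Rightarrow> ('o1, 'a1, 'o2, 'a2) functor_data \<Rightarrow> bool" where
  "full_functor K L F \<longleftrightarrow> (\<forall>x\<in>cObj K. \<forall>y\<in>cObj K. \<forall>g\<in>cArr L.
     cDom L g = fst F x \<longrightarrow> cCod L g = fst F y \<longrightarrow>
     (\<exists>f\<in>cArr K. cDom K f = x \<and> cCod K f = y \<and> snd F f = g))"

locale fully_faithful_surjective =
  fixes K :: "('o1, 'a1) cat" and L :: "('o2, 'a2) cat" and F :: "('o1, 'a1, 'o2, 'a2) functor_data"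
  assumes K: "is_category K" and L: "is_category L" and F: "is_functor K L F"
    and faithful: "faithful_functor K F" and full: "full_functor K L F"
    and surjective: "\<forall>y\<in>cObj L. \<exists>x\<in>cObj K. fst F x = y"
begin

definition lifts :: "'o1 \<Rightarrow> 'o1 \<Rightarrow> 'a2 \<Rightarrow> 'a1 \<Rightarrow> bool" where
  "lifts x y g f \<longleftrightarrow> f \<in> cArr K \<and> cDom K f = x \<and> cCod K f = y \<and> snd F f = g"

definition lift :: "'o1 \<Rightarrow> 'o1 \<Rightarrow> 'a2 \<Rightarrow> 'a1" where
  "lift x y g = (THE f. lifts x y g f)"

lemma lifts_unique: "lifts x y g f \<Longrightarrow> lifts x y g f' \<Longrightarrow> f = f'"
  using faithful unfolding faithful_functor_def lifts_def by metis

lemma lift_eq: "lifts x y g f \<Longrightarrow> lift x y g = f"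
  unfolding lift_def using lifts_unique by blast

lemma lift:
  assumes "x \<in> cObj K" "y \<in> cObj K" "g \<in> cArr L" "cDom L g = fst F x" "cCod L g = fst F y"
  shows "lifts x y g (lift x y g)"
proof -
  obtain f where "lifts x y g f"
    using full assms unfolding full_functor_def lifts_def by blast
  then show ?thesis using lift_eq by simp
qed

definition inverse_obj :: "'o2 \<Rightarrow> 'o1" where
  "inverse_obj y = (SOME x. x \<in> cObj K \<and> fst F x = y)"

lemma inverse_obj: "y \<in> cObj L \<Longrightarrow> inverse_obj y \<in> cObj K \<and> fst F (inverse_obj y) = y"
  unfolding inverse_obj_def using surjective someI_ex[of "\<lambda>x. x \<in> cObj K \<and> fst F x = _"] by blast

definition inverse_functor :: "('o2, 'a2, 'o1, 'a1) functor_data" where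
  "inverse_functor = (inverse_obj, \<lambda>g. lift (inverse_obj (cDom L g)) (inverse_obj (cCod L g)) g)"

lemma inverse_functor_arr:
  assumes "g \<in> cArr L"
  shows "lifts (inverse_obj (cDom L g)) (inverse_obj (cCod L g)) g (snd inverse_functor g)"
proof -
  have "cDom L g \<in> cObj L" "cCod L g \<in> cObj L" using category_dom_cod[OF L assms] by auto
  then show ?thesis
    using lift[of "inverse_obj (cDom L g)" "inverse_obj (cCod L g)" g] inverse_obj assms
    unfolding inverse_functor_def by simp
qed

lemma is_functor_inverse: "is_functor L K inverse_functor"
  unfolding is_functor_def
proof (intro conjI ballI impI)
  show "fst inverse_functor y \<in> cObj K" if "y \<in> cObj L" for y
    using inverse_obj that unfolding inverse_functor_def by simp
  show "snd inverse_functor g \<in> cArr K"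
    and "cDom K (snd inverse_functor g) = fst inverse_functor (cDom L g)"
    and "cCod K (snd inverse_functor g) = fst inverse_functor (cCod L g)" if "g \<in> cArr L" for g
    using inverse_functor_arr[OF that] unfolding lifts_def inverse_functor_def by simp_all
  show "snd inverse_functor (cId L y) = cId K (fst inverse_functor y)" if y: "y \<in> cObj L" for y
  proof -
    have "lifts (inverse_obj y) (inverse_obj y) (cId L y) (cId K (inverse_obj y))"
      using inverse_obj[OF y] category_id[OF K] functor_id[OF F] unfolding lifts_def by simp
    then show ?thesis
      using lift_eq category_id[OF L y] unfolding inverse_functor_def by simp
  qed
  show "snd inverse_functor (cComp L g f) = cComp K (snd inverse_functor g) (snd inverse_functor f)"
    if "f \<in> cArr L" "g \<in> cArr L" "cCod L f = cDom L g" for f g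
  proof -
    have Gf: "lifts (inverse_obj (cDom L f)) (inverse_obj (cCod L f)) f (snd inverse_functor f)"
      and Gg: "lifts (inverse_obj (cDom L g)) (inverse_obj (cCod L g)) g (snd inverse_functor g)"
      using inverse_functor_arr[OF that(1)] inverse_functor_arr[OF that(2)] by blast+
    have "lifts (inverse_obj (cDom L f)) (inverse_obj (cCod L g)) (cComp L g f)
        (cComp K (snd inverse_functor g) (snd inverse_functor f))"
      using Gf Gg that(3) category_comp[OF K] functor_comp[OF F] unfolding lifts_def by simp
    moreover have "cDom L (cComp L g f) = cDom L f" "cCod L (cComp L g f) = cCod L g"
      using category_comp[OF L that] by auto
    ultimately show ?thesis
      using lift_eq unfolding inverse_functor_def by simp
  qed
qed

definition unit :: "'o1 \<Rightarrow> 'a1" where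
  "unit x = lift x (inverse_obj (fst F x)) (cId L (fst F x))"

lemma unit_lifts:
  assumes "x \<in> cObj K"
  shows "lifts x (inverse_obj (fst F x)) (cId L (fst F x)) (unit x)"
proof -
  have "fst F x \<in> cObj L" using functor_obj[OF F assms] .
  then show ?thesis
    unfolding unit_def using lift assms inverse_obj category_id[OF L] by simp
qed

lemma unit_iso:
  assumes x: "x \<in> cObj K"
  shows "cat_iso K (unit x)"
proof -
  have Fx: "fst F x \<in> cObj L" using functor_obj[OF F x] .
  note Gx = inverse_obj[OF Fx] and u = unit_lifts[OF x]
  define v where "v = lift (inverse_obj (fst F x)) x (cId L (fst F x))"
  have v: "lifts (inverse_obj (fst F x)) x (cId L (fst F x)) v"
    unfolding v_def using lift x Gx category_id[OF L Fx] by simp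
  have "lifts x x (cId L (fst F x)) (cComp K v (unit x))"
    "lifts x x (cId L (fst F x)) (cId K x)"
    "lifts (inverse_obj (fst F x)) (inverse_obj (fst F x)) (cId L (fst F x)) (cComp K (unit x) v)"
    "lifts (inverse_obj (fst F x)) (inverse_obj (fst F x)) (cId L (fst F x)) (cId K (inverse_obj (fst F x)))"
    using u v x Gx Fx category_comp[OF K] category_id[OF K] category_id_comp_id[OF L]
      functor_comp[OF F] functor_id[OF F] unfolding lifts_def by auto
  then show ?thesis
    unfolding cat_iso_def using lifts_unique u v unfolding lifts_def by metis
qed

lemma unit_natural:
  assumes f: "f \<in> cArr K"
  shows "cComp K (unit (cCod K f)) f = cComp K (snd inverse_functor (snd F f)) (unit (cDom K f))"
proof -
  have x: "cDom K f \<in> cObj K" and y: "cCod K f \<in> cObj K" using category_dom_cod[OF K f] by auto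
  have GFf: "lifts (inverse_obj (fst F (cDom K f))) (inverse_obj (fst F (cCod K f))) (snd F f)
      (snd inverse_functor (snd F f))"
    using inverse_functor_arr functor_arr[OF F f] by fastforce
  have Ff: "cComp L (cId L (fst F (cCod K f))) (snd F f) = snd F f"
    "cComp L (snd F f) (cId L (fst F (cDom K f))) = snd F f"
    using category_unit[OF L] functor_arr[OF F f] by metis+
  have "lifts (cDom K f) (inverse_obj (fst F (cCod K f))) (snd F f) (cComp K (unit (cCod K f)) f)"
    "lifts (cDom K f) (inverse_obj (fst F (cCod K f))) (snd F f)
      (cComp K (snd inverse_functor (snd F f)) (unit (cDom K f)))"
    using f unit_lifts[OF x] unit_lifts[OF y] GFf Ff category_comp[OF K] functor_comp[OF F]
      functor_arr[OF F f] unfolding lifts_def by auto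
  then show ?thesis using lifts_unique by blast
qed

lemma is_nat_iso_unit: "is_nat_iso K K fid (fcomp inverse_functor F) unit"
  using unit_lifts unit_iso unit_natural
  unfolding is_nat_iso_def is_nat_trans_def lifts_def fid_def fcomp_def inverse_functor_def by simp

lemma is_nat_iso_counit: "is_nat_iso L L (fcomp F inverse_functor) fid (cId L)"
proof -
  have "cId L y \<in> cArr L \<and> cDom L (cId L y) = fst (fcomp F inverse_functor) y \<and> cCod L (cId L y) = fst fid y"
    if "y \<in> cObj L" for y
    using that category_id[OF L] inverse_obj unfolding fcomp_def fid_def inverse_functor_def by simp
  moreover have "cat_iso L (cId L y)" if "y \<in> cObj L" for y
    unfolding cat_iso_def using category_id[OF L that] category_unit[OF L] by metis
  moreover have "cComp L (cId L (cCod L g)) (snd (fcomp F inverse_functor) g) = cComp L (snd fid g) (cId L (cDom L g))"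
    if "g \<in> cArr L" for g
    using that inverse_functor_arr category_unit[OF L] unfolding lifts_def fcomp_def fid_def by simp
  ultimately show ?thesis
    unfolding is_nat_iso_def is_nat_trans_def by blast
qed

lemma equivalence: "equivalence_of_categories K L F"
  unfolding equivalence_of_categories_def
  using F is_functor_inverse is_nat_iso_unit is_nat_iso_counit by blast

end

section \<open>Flat double categories and squares categories\<close>

lemma vweq_arr: "vweq C Z f \<Longrightarrow> f \<in> vArr C"
  unfolding vweq_def by blast

locale flat_double =
  fixes C :: "('o, 'h, 'v) dblcat"
  assumes flat: "flat_double_category C"
begin

lemma is_category_Vcat: "is_category (Vcat C)"
  using flat unfolding flat_double_category_def by blast

lemma is_category_Hcat: "is_category (Hcat C)"
  using flat unfolding flat_double_category_def by blast

lemma v_id: "x \<in> dObj C \<Longrightarrow> vId C x \<in> vArr C \<and> vDom C (vId C x) = x \<and> vCod C (vId C x) = x"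
  using category_id[OF is_category_Vcat] unfolding Vcat_def by simp

lemma v_dom_cod: "f \<in> vArr C \<Longrightarrow> vDom C f \<in> dObj C \<and> vCod C f \<in> dObj C"
  using category_dom_cod[OF is_category_Vcat] unfolding Vcat_def by simp

lemma v_comp: "f \<in> vArr C \<Longrightarrow> g \<in> vArr C \<Longrightarrow> vCod C f = vDom C g \<Longrightarrow>
    vComp C g f \<in> vArr C \<and> vDom C (vComp C g f) = vDom C f \<and> vCod C (vComp C g f) = vCod C g"
  using category_comp[OF is_category_Vcat] unfolding Vcat_def by simp

lemma v_comp_id_right: "f \<in> vArr C \<Longrightarrow> vComp C f (vId C (vDom C f)) = f"
  using category_unit[OF is_category_Vcat] unfolding Vcat_def by simp

lemma v_comp_id_left: "f \<in> vArr C \<Longrightarrow> vComp C (vId C (vCod C f)) f = f"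
  using category_unit[OF is_category_Vcat] unfolding Vcat_def by simp

lemma v_assoc: "f \<in> vArr C \<Longrightarrow> g \<in> vArr C \<Longrightarrow> h \<in> vArr C \<Longrightarrow> vCod C f = vDom C g \<Longrightarrow>
    vCod C g = vDom C h \<Longrightarrow> vComp C h (vComp C g f) = vComp C (vComp C h g) f"
  using category_assoc[OF is_category_Vcat] unfolding Vcat_def by simp

lemma h_dom_cod: "f \<in> hArr C \<Longrightarrow> hDom C f \<in> dObj C \<and> hCod C f \<in> dObj C"
  using category_dom_cod[OF is_category_Hcat] unfolding Hcat_def by simp

lemma h_comp: "f \<in> hArr C \<Longrightarrow> g \<in> hArr C \<Longrightarrow> hCod C f = hDom C g \<Longrightarrow>
    hComp C g f \<in> hArr C \<and> hDom C (hComp C g f) = hDom C f \<and> hCod C (hComp C g f) = hCod C g"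
  using category_comp[OF is_category_Hcat] unfolding Hcat_def by simp

lemma sq_boundary: "Sq C f g h k \<Longrightarrow>
    f \<in> hArr C \<and> k \<in> hArr C \<and> g \<in> vArr C \<and> h \<in> vArr C \<and>
    hDom C f = vDom C g \<and> hCod C f = vDom C h \<and> hDom C k = vCod C g \<and> hCod C k = vCod C h"
  using flat unfolding flat_double_category_def by blast

lemma sq_vId: "f \<in> hArr C \<Longrightarrow> Sq C f (vId C (hDom C f)) (vId C (hCod C f)) f"
  using flat unfolding flat_double_category_def by blast

lemma sq_hpaste: "Sq C f g h k \<Longrightarrow> Sq C f' h h' k' \<Longrightarrow> Sq C (hComp C f' f) g h' (hComp C k' k)"
  using flat unfolding flat_double_category_def by blast

lemma sq_vpaste: "Sq C f g h k \<Longrightarrow> Sq C k g' h' k' \<Longrightarrow> Sq C f (vComp C g' g) (vComp C h' h) k'"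
  using flat unfolding flat_double_category_def by blast

end

locale squares_cat =
  fixes C :: "('o, 'h, 'v) dblcat" and Z :: 'o
  assumes squares: "squares_category C Z"

sublocale squares_cat \<subseteq> flat_double C
  using squares unfolding squares_category_def by unfold_locales blast

context squares_cat
begin

lemma Z_obj: "Z \<in> dObj C"
  using squares unfolding squares_category_def by blast

lemma hinit_ex1: "A \<in> dObj C \<Longrightarrow> \<exists>!h. h \<in> hArr C \<and> hDom C h = Z \<and> hCod C h = A"
  using squares unfolding squares_category_def by blast

lemma vterm_ex1: "A \<in> dObj C \<Longrightarrow> \<exists>!v. v \<in> vArr C \<and> vDom C v = A \<and> vCod C v = Z"
  using squares unfolding squares_category_def by blast

lemma hinit: "A \<in> dObj C \<Longrightarrow> hinit C Z A \<in> hArr C \<and> hDom C (hinit C Z A) = Z \<and> hCod C (hinit C Z A) = A"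
  unfolding hinit_def by (rule theI'[OF hinit_ex1])

lemma vterm: "A \<in> dObj C \<Longrightarrow> vterm C Z A \<in> vArr C \<and> vDom C (vterm C Z A) = A \<and> vCod C (vterm C Z A) = Z"
  unfolding vterm_def by (rule theI'[OF vterm_ex1])

lemma hinit_unique:
  assumes "h \<in> hArr C" "hDom C h = Z"
  shows "h = hinit C Z (hCod C h)"
proof -
  have "hCod C h \<in> dObj C" using h_dom_cod assms(1) by blast
  then show ?thesis
    unfolding hinit_def using the1_equality[OF hinit_ex1] assms by simp
qed

lemma vterm_eq:
  assumes "v \<in> vArr C" "vCod C v = Z"
  shows "vterm C Z (vDom C v) = v"
proof -
  have "vDom C v \<in> dObj C" using v_dom_cod assms(1) by blast
  then show ?thesis
    unfolding vterm_def using the1_equality[OF vterm_ex1] assms by simp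
qed

lemma vterm_unique:
  "v \<in> vArr C \<Longrightarrow> v' \<in> vArr C \<Longrightarrow> vDom C v = vDom C v' \<Longrightarrow> vCod C v = Z \<Longrightarrow> vCod C v' = Z \<Longrightarrow> v = v'"
  using vterm_eq by metis

lemma vweq_vId: "A \<in> dObj C \<Longrightarrow> vweq C Z (vId C A)"
  unfolding vweq_def using v_id[of A] v_id[OF Z_obj] sq_vId[of "hinit C Z A"] hinit[of A] by auto

text \<open>Pasting a square onto the weak-equivalence square of its left side exhibits its right side
  as a weak equivalence, since horizontal arrows out of \<open>O\<close> are unique.\<close>
lemma vweq_sq_right:
  assumes "vweq C Z g" "Sq C f g h k"
  shows "vweq C Z h"
proof -
  have g: "Sq C (hinit C Z (vDom C g)) (vId C Z) g (hinit C Z (vCod C g))"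
    using assms(1) unfolding vweq_def by blast
  note bd = sq_boundary[OF assms(2)] sq_boundary[OF g] v_id[OF Z_obj]
  have "hComp C f (hinit C Z (vDom C g)) = hinit C Z (vDom C h)"
    using h_comp[of "hinit C Z (vDom C g)" f] bd hinit_unique[of "hComp C f (hinit C Z (vDom C g))"]
    by simp
  moreover have "hComp C k (hinit C Z (vCod C g)) = hinit C Z (vCod C h)"
    using h_comp[of "hinit C Z (vCod C g)" k] bd hinit_unique[of "hComp C k (hinit C Z (vCod C g))"]
    by simp
  ultimately show ?thesis
    using sq_hpaste[OF g assms(2)] bd unfolding vweq_def by simp
qed

lemma vweq_comp:
  assumes "vweq C Z f" "vweq C Z g" "vCod C f = vDom C g"
  shows "vweq C Z (vComp C g f)"
proof -
  have f: "Sq C (hinit C Z (vDom C f)) (vId C Z) f (hinit C Z (vCod C f))"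
    and g: "Sq C (hinit C Z (vDom C g)) (vId C Z) g (hinit C Z (vCod C g))"
    using assms(1,2) unfolding vweq_def by blast+
  have "vComp C (vId C Z) (vId C Z) = vId C Z"
    using v_comp_id_left v_id Z_obj by metis
  then show ?thesis
    using sq_vpaste[OF f, of "vId C Z" g] g assms(3) v_comp[of f g] assms(1,2)
    unfolding vweq_def by simp
qed

end

section \<open>Isostable squares categories\<close>

definition v_inverse :: "('o, 'h, 'v) dblcat \<Rightarrow> 'v \<Rightarrow> 'v \<Rightarrow> bool" where
  "v_inverse C g g' \<longleftrightarrow> g \<in> vArr C \<and> g' \<in> vArr C \<and> vDom C g' = vCod C g \<and> vCod C g' = vDom C g \<and>
     vComp C g' g = vId C (vDom C g) \<and> vComp C g g' = vId C (vCod C g)"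

lemma (in flat_double) v_inverse_vId: "x \<in> dObj C \<Longrightarrow> v_inverse C (vId C x) (vId C x)"
  unfolding v_inverse_def using v_id v_comp_id_left by metis

lemma (in flat_double) v_inverse_cancel_left:
  "v_inverse C d d' \<Longrightarrow> x \<in> vArr C \<Longrightarrow> vCod C x = vDom C d \<Longrightarrow> vComp C d' (vComp C d x) = x"
  unfolding v_inverse_def using v_assoc v_comp_id_left by metis

lemma (in flat_double) v_inverse_cancel_right:
  assumes "v_inverse C d d'" "x \<in> vArr C" "y \<in> vArr C" "vDom C x = vCod C d" "vDom C y = vCod C d"
    and "vComp C x d = vComp C y d"
  shows "x = y"
proof -
  have "x = vComp C (vComp C x d) d'" "y = vComp C (vComp C y d) d'"
    using assms(1-5) v_assoc v_comp_id_right unfolding v_inverse_def by metis+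
  then show ?thesis using assms(6) by simp
qed

lemma (in flat_double) spanMor_if_sqMor:
  "sqMor C (f, g, h, k) (f', g', h', k') (ta, tb, tc, td) \<Longrightarrow> Sq C f g h k \<Longrightarrow> Sq C f' g' h' k' \<Longrightarrow>
    spanMor C (f, g) (f', g') (ta, tb, tc)"
  unfolding sqMor_def spanMor_def using sq_boundary by auto

text \<open>\<open>s\<close> and \<open>w\<close> are the span half of the stability data.\<close>

locale isostable_squares =
  fixes C :: "('o, 'h, 'v) dblcat" and Z :: 'o and s and w
  assumes isostable: "isostable C Z"
    and filler: "is_functor (FunSpan C) (FunSq C) s"
    and filler_obj: "\<forall>X\<in>cObj (FunSpan C). fst istar (fst s X) = X"
    and filler_arr: "\<forall>\<phi>\<in>cArr (FunSpan C). snd istar (snd s \<phi>) = \<phi>"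
    and comparison: "is_nat_trans (FunSq C) (FunSq C) (fcomp s istar) fid w"
    and comparison_components: "\<forall>X\<in>cObj (FunSq C).
      compA (w X) = vId C (cornerA C X) \<and> compB (w X) = vId C (cornerB C X) \<and>
      compC (w X) = vId C (cornerC C X)"

sublocale isostable_squares \<subseteq> squares_cat C Z
  using isostable unfolding isostable_def stable_def by unfold_locales blast

context isostable_squares
begin

lemma vweq_inverse: "vweq C Z f \<Longrightarrow> \<exists>f'. v_inverse C f f'"
  using isostable unfolding isostable_def cat_iso_def Vcat_def v_inverse_def by auto

lemma sq_flip:
  assumes sq: "Sq C f g h k" and "v_inverse C g g'" "v_inverse C h h'"
  shows "Sq C k g' h' f"
proof -
  note flip = isostable[unfolded isostable_def, THEN conjunct2, THEN conjunct2, THEN conjunct2,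
    rule_format, of f k g h g' h']
  show ?thesis
    using flip assms sq_boundary[OF sq] unfolding v_inverse_def by force
qed

lemma filler_square:
  assumes "f \<in> hArr C" "g \<in> vArr C" "hDom C f = vDom C g"
  shows "\<exists>h k. fst s (f, g) = (f, g, h, k) \<and> Sq C f g h k"
proof -
  have X: "(f, g) \<in> cObj (FunSpan C)"
    using assms unfolding FunSpan_def spanObj_def by simp
  then have "fst s (f, g) \<in> cObj (FunSq C)"
    using functor_obj[OF filler] by blast
  then obtain f0 g0 h k where s: "fst s (f, g) = (f0, g0, h, k)" "Sq C f0 g0 h k"
    unfolding FunSq_def sqObj_def by auto
  moreover have "f0 = f" "g0 = g"
    using filler_obj X s(1) unfolding istar_def istar_o_def by auto
  ultimately show ?thesis by blast
qed

lemma filler_morphism: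
  assumes "((f, g), (f', g'), (ta, tb, tc)) \<in> cArr (FunSpan C)"
  shows "\<exists>td. snd s ((f, g), (f', g'), (ta, tb, tc)) = (fst s (f, g), fst s (f', g'), (ta, tb, tc, td)) \<and>
    sqMor C (fst s (f, g)) (fst s (f', g')) (ta, tb, tc, td)"
proof -
  obtain X Y a b c d where s: "snd s ((f, g), (f', g'), (ta, tb, tc)) = (X, Y, (a, b, c, d))"
    by (metis prod.exhaust)
  have "X = fst s (f, g)" "Y = fst s (f', g')" "sqMor C X Y (a, b, c, d)"
    using functor_arr[OF filler assms] s unfolding FunSq_def FunSpan_def by auto
  moreover have "a = ta" "b = tb" "c = tc"
    using filler_arr assms s unfolding istar_def by auto
  ultimately show ?thesis using s by blast
qed

lemma comparison_square:
  assumes q: "Sq C f g h k"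
  obtains h0 k0 d where "fst s (f, g) = (f, g, h0, k0)" "Sq C f g h0 k0"
    "w (f, g, h, k) = ((f, g, h0, k0), (f, g, h, k), (vId C (hDom C f), vId C (hCod C f), vId C (hDom C k), d))"
    "vweq C Z d" "Sq C k0 (vId C (hDom C k)) d k" "vComp C d h0 = h"
proof -
  note bd = sq_boundary[OF q]
  obtain h0 k0 where s: "fst s (f, g) = (f, g, h0, k0)" "Sq C f g h0 k0"
    using filler_square bd by blast
  have X: "(f, g, h, k) \<in> cObj (FunSq C)"
    using q unfolding FunSq_def sqObj_def by simp
  obtain X1 Y1 a b c d where wX: "w (f, g, h, k) = (X1, Y1, (a, b, c, d))"
    by (metis prod.exhaust)
  have "w (f, g, h, k) \<in> cArr (FunSq C) \<and> cDom (FunSq C) (w (f, g, h, k)) = fst s (f, g) \<and>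
      cCod (FunSq C) (w (f, g, h, k)) = (f, g, h, k)"
    using comparison X unfolding is_nat_trans_def fcomp_def fid_def istar_def istar_o_def by simp
  then have XY: "X1 = (f, g, h0, k0)" "Y1 = (f, g, h, k)"
    and m: "sqMor C (f, g, h0, k0) (f, g, h, k) (a, b, c, d)"
    using wX s(1) unfolding FunSq_def by auto
  have abc: "a = vId C (hDom C f)" "b = vId C (hCod C f)" "c = vId C (hDom C k)"
    using comparison_components X wX
    unfolding compA_def compB_def compC_def cornerA_def cornerB_def cornerC_def by auto
  have d: "Sq C k0 (vId C (hDom C k)) d k" "vComp C d h0 = vComp C h (vId C (hCod C f))"
    using m abc unfolding sqMor_def by auto
  have "vComp C h (vId C (hCod C f)) = h"
    using v_comp_id_right bd by metis
  moreover have "vweq C Z d"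
    using vweq_sq_right[OF vweq_vId d(1)] bd h_dom_cod by metis
  ultimately show ?thesis
    using that s wX XY abc d by simp
qed

lemma comparison_natural:
  assumes "((f, g, h, k), (f', g', h', k'), (ta, tb, tc, td)) \<in> cArr (FunSq C)"
    and "snd s ((f, g), (f', g'), (ta, tb, tc)) = (fst s (f, g), fst s (f', g'), (ta, tb, tc, e))"
    and "w (f, g, h, k) = (fst s (f, g), (f, g, h, k), (a, b, c, d))"
    and "w (f', g', h', k') = (fst s (f', g'), (f', g', h', k'), (a', b', c', d'))"
  shows "vComp C d' e = vComp C td d"
  using comparison assms unfolding is_nat_trans_def FunSq_def fcomp_def fid_def istar_def istar_o_def
  by fastforce

lemma sqMor_completion_unique:
  assumes q: "Sq C f g h k" and q': "Sq C f' g' h' k'"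
    and m: "sqMor C (f, g, h, k) (f', g', h', k') (ta, tb, tc, td)"
    and m': "sqMor C (f, g, h, k) (f', g', h', k') (ta, tb, tc, td')"
  shows "td = td'"
proof -
  have "((f, g), (f', g'), (ta, tb, tc)) \<in> cArr (FunSpan C)"
    using spanMor_if_sqMor[OF m q q'] sq_boundary[OF q] sq_boundary[OF q']
    unfolding FunSpan_def spanObj_def by simp
  then obtain e where e: "snd s ((f, g), (f', g'), (ta, tb, tc)) = (fst s (f, g), fst s (f', g'), (ta, tb, tc, e))"
    using filler_morphism by blast
  obtain h0 k0 d where d: "fst s (f, g) = (f, g, h0, k0)" "vweq C Z d" "Sq C k0 (vId C (hDom C k)) d k"
    "w (f, g, h, k) = ((f, g, h0, k0), (f, g, h, k), (vId C (hDom C f), vId C (hCod C f), vId C (hDom C k), d))"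
    using comparison_square[OF q] by metis
  obtain h1 k1 d' where d': "fst s (f', g') = (f', g', h1, k1)"
    "w (f', g', h', k') = ((f', g', h1, k1), (f', g', h', k'), (vId C (hDom C f'), vId C (hCod C f'), vId C (hDom C k'), d'))"
    using comparison_square[OF q'] by metis
  have arr: "((f, g, h, k), (f', g', h', k'), (ta, tb, tc, t)) \<in> cArr (FunSq C)"
    if "sqMor C (f, g, h, k) (f', g', h', k') (ta, tb, tc, t)" for t
    using that q q' unfolding FunSq_def sqObj_def by simp
  have "vComp C td d = vComp C d' e" "vComp C td' d = vComp C d' e"
    using comparison_natural[OF arr[OF m] e] comparison_natural[OF arr[OF m'] e] d d' by simp_all
  moreover obtain di where "v_inverse C d di" using vweq_inverse d(2) by blast
  moreover have "td \<in> vArr C" "td' \<in> vArr C" "vDom C td = vCod C d" "vDom C td' = vCod C d"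
    using m m' sq_boundary[OF d(3)] unfolding sqMor_def by auto
  ultimately show ?thesis using v_inverse_cancel_right by metis
qed

lemma comparison_inverse:
  assumes q: "Sq C f g h k"
  obtains h0 k0 d' where "fst s (f, g) = (f, g, h0, k0)" "Sq C f g h0 k0"
    "Sq C k (vId C (hDom C k)) d' k0" "vComp C d' h = h0"
proof -
  obtain h0 k0 d where s0: "fst s (f, g) = (f, g, h0, k0)" "Sq C f g h0 k0"
    and d: "vweq C Z d" "Sq C k0 (vId C (hDom C k)) d k" "vComp C d h0 = h"
    using comparison_square[OF q] by metis
  obtain d' where d': "v_inverse C d d'" using vweq_inverse d(1) by blast
  have "Sq C k (vId C (hDom C k)) d' k0"
    using sq_flip[OF d(2) v_inverse_vId d'] h_dom_cod sq_boundary[OF q] by blast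
  moreover have "vComp C d' h = h0"
    using v_inverse_cancel_left[OF d'] d(3) sq_boundary[OF d(2)] sq_boundary[OF s0(2)] by metis
  ultimately show ?thesis using that s0 by blast
qed

lemma sqMor_completion_exists:
  assumes q: "Sq C f g h k" and q': "Sq C f' g' h' k'"
    and sp: "spanMor C (f, g) (f', g') (ta, tb, tc)"
  shows "\<exists>td. sqMor C (f, g, h, k) (f', g', h', k') (ta, tb, tc, td)"
proof -
  note bd = sq_boundary[OF q] sq_boundary[OF q']
  have t: "ta \<in> vArr C" "vDom C ta = hDom C f" "vCod C ta = hDom C f'"
    "tb \<in> vArr C" "vDom C tb = hCod C f" "vCod C tb = hCod C f'"
    "tc \<in> vArr C" "vDom C tc = hDom C k" "vCod C tc = hDom C k'"
    "Sq C f ta tb f'" "vComp C tc g = vComp C g' ta"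
    using sp bd unfolding spanMor_def by auto
  obtain h0 k0 di where s0: "fst s (f, g) = (f, g, h0, k0)" "Sq C f g h0 k0"
    and di: "Sq C k (vId C (hDom C k)) di k0" "vComp C di h = h0"
    using comparison_inverse[OF q] by metis
  obtain h1 k1 d' where s1: "fst s (f', g') = (f', g', h1, k1)" "Sq C f' g' h1 k1"
    and d': "Sq C k1 (vId C (hDom C k')) d' k'" "vComp C d' h1 = h'"
    using comparison_square[OF q'] by metis
  have "((f, g), (f', g'), (ta, tb, tc)) \<in> cArr (FunSpan C)"
    using sp bd unfolding FunSpan_def spanObj_def by simp
  then obtain e where "sqMor C (f, g, h0, k0) (f', g', h1, k1) (ta, tb, tc, e)"
    using filler_morphism s0 s1 by metis
  then have e: "Sq C k0 tc e k1" "vComp C e h0 = vComp C h1 tb"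
    unfolding sqMor_def by auto
  note bd' = sq_boundary[OF s1(2)] sq_boundary[OF di(1)] sq_boundary[OF d'(1)] sq_boundary[OF e(1)]
  (* the completion e of the filler squares, transported along the comparisons *)
  define td where "td = vComp C d' (vComp C e di)"
  have "vComp C (vId C (hDom C k')) (vComp C tc (vId C (hDom C k))) = tc"
    using t v_comp_id_left v_comp_id_right by metis
  then have sq: "Sq C k tc td k'"
    unfolding td_def using sq_vpaste[OF sq_vpaste[OF di(1) e(1)] d'(1)] by simp
  have "vComp C td h = vComp C d' (vComp C e (vComp C di h))"
    unfolding td_def using bd bd' v_assoc v_comp by metis
  also have "\<dots> = vComp C h' tb"
    using di(2) e(2) d'(2) v_assoc bd' t by metis
  finally show ?thesis
    using sq t bd sq_boundary[OF sq] unfolding sqMor_def by auto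
qed

lemma sqMor_completion_ex1:
  assumes "Sq C f g h k" "Sq C f' g' h' k'" "spanMor C (f, g) (f', g') (ta, tb, tc)"
  shows "\<exists>!td. sqMor C (f, g, h, k) (f', g', h', k') (ta, tb, tc, td)"
  using sqMor_completion_exists[OF assms] sqMor_completion_unique[OF assms(1,2)] by blast

end

section \<open>The categories \<open>S\<^sub>n\<close> and \<open>H\<^sub>n\<close>\<close>

lemma
  assumes "is_sobj C Z n (A, Ah, Av)"
  shows sobj_obj: "j \<le> k \<Longrightarrow> k \<le> n \<Longrightarrow> A j k \<in> dObj C"
    and sobj_diag: "j \<le> n \<Longrightarrow> A j j = Z"
    and sobj_hor: "j \<le> k \<Longrightarrow> k < n \<Longrightarrow>
      Ah j k \<in> hArr C \<and> hDom C (Ah j k) = A j k \<and> hCod C (Ah j k) = A j (Suc k)"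
    and sobj_ver: "j < k \<Longrightarrow> k \<le> n \<Longrightarrow>
      Av j k \<in> vArr C \<and> vDom C (Av j k) = A j k \<and> vCod C (Av j k) = A (Suc j) k"
    and sobj_cell: "j < k \<Longrightarrow> k < n \<Longrightarrow> Sq C (Ah j k) (Av j k) (Av j (Suc k)) (Ah (Suc j) k)"
  using assms unfolding is_sobj_def by auto

lemma
  assumes "is_smor C Z n (A, Ah, Av) (B, Bh, Bv) \<phi>"
  shows smor_undefined: "\<not> (j \<le> k \<and> k \<le> n) \<Longrightarrow> \<phi> j k = undefined"
    and smor_component: "j \<le> k \<Longrightarrow> k \<le> n \<Longrightarrow>
      \<phi> j k \<in> vArr C \<and> vDom C (\<phi> j k) = A j k \<and> vCod C (\<phi> j k) = B j k \<and> vweq C Z (\<phi> j k)"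
    and smor_hor_sq: "j \<le> k \<Longrightarrow> k < n \<Longrightarrow> Sq C (Ah j k) (\<phi> j k) (\<phi> j (Suc k)) (Bh j k)"
    and smor_ver_comm: "j < k \<Longrightarrow> k \<le> n \<Longrightarrow> vComp C (\<phi> (Suc j) k) (Av j k) = vComp C (Bv j k) (\<phi> j k)"
  using assms unfolding is_smor_def by auto

lemma
  assumes "is_hobj C Z n (A, a)"
  shows hobj_undefined: "\<not> i \<le> n \<Longrightarrow> A i = undefined" "\<not> i < n \<Longrightarrow> a i = undefined"
    and hobj_start: "A 0 = Z"
    and hobj_obj: "i \<le> n \<Longrightarrow> A i \<in> dObj C"
    and hobj_hor: "i < n \<Longrightarrow> a i \<in> hArr C \<and> hDom C (a i) = A i \<and> hCod C (a i) = A (Suc i)"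
  using assms unfolding is_hobj_def by auto

lemma
  assumes "is_hmor C Z n (A, a) (B, b) \<phi>"
  shows hmor_undefined: "\<not> i \<le> n \<Longrightarrow> \<phi> i = undefined"
    and hmor_component: "i \<le> n \<Longrightarrow> vweq C Z (\<phi> i) \<and> vDom C (\<phi> i) = A i \<and> vCod C (\<phi> i) = B i"
    and hmor_start: "\<phi> 0 = vId C Z"
    and hmor_sq: "i < n \<Longrightarrow> Sq C (a i) (\<phi> i) (\<phi> (Suc i)) (b i)"
  using assms unfolding is_hmor_def by auto

context squares_cat
begin

lemma smor_vId:
  assumes X: "is_sobj C Z n X"
  shows "is_smor C Z n X X (\<lambda>j k. if j \<le> k \<and> k \<le> n then vId C (fst X j k) else undefined)"
proof -
  obtain A Ah Av where e: "X = (A, Ah, Av)" by (cases X)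
  note X = X[unfolded e]
  have "vComp C (vId C (A (Suc j) k)) (Av j k) = vComp C (Av j k) (vId C (A j k))" if "j < k" "k \<le> n" for j k
    using sobj_ver[OF X that] v_comp_id_left v_comp_id_right by metis
  moreover have "vId C (A j k) \<in> vArr C \<and> vDom C (vId C (A j k)) = A j k \<and>
      vCod C (vId C (A j k)) = A j k \<and> vweq C Z (vId C (A j k))" if "j \<le> k" "k \<le> n" for j k
    using v_id vweq_vId sobj_obj[OF X that] by simp
  moreover have "Sq C (Ah j k) (vId C (A j k)) (vId C (A j (Suc k))) (Ah j k)" if "j \<le> k" "k < n" for j k
    using sq_vId sobj_hor[OF X that] by metis
  ultimately show ?thesis
    unfolding e is_smor_def by simp
qed

lemma smor_vComp:
  assumes X: "is_sobj C Z n X" and Y: "is_sobj C Z n Y" and W: "is_sobj C Z n W"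
    and \<phi>: "is_smor C Z n X Y \<phi>" and \<psi>: "is_smor C Z n Y W \<psi>"
  shows "is_smor C Z n X W (\<lambda>j k. if j \<le> k \<and> k \<le> n then vComp C (\<psi> j k) (\<phi> j k) else undefined)"
proof -
  obtain A Ah Av where eX: "X = (A, Ah, Av)" by (cases X)
  obtain B Bh Bv where eY: "Y = (B, Bh, Bv)" by (cases Y)
  obtain D Dh Dv where eW: "W = (D, Dh, Dv)" by (cases W)
  note X = X[unfolded eX] and Y = Y[unfolded eY] and W = W[unfolded eW]
    and \<phi> = \<phi>[unfolded eX eY] and \<psi> = \<psi>[unfolded eY eW]
  have "vComp C (vComp C (\<psi> (Suc j) k) (\<phi> (Suc j) k)) (Av j k) = vComp C (Dv j k) (vComp C (\<psi> j k) (\<phi> j k))"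
    if jk: "j < k" "k \<le> n" for j k
  proof -
    have c: "Suc j \<le> k" "j \<le> k" using jk by auto
    note arrs = smor_component[OF \<phi> c(1) jk(2)] smor_component[OF \<phi> c(2) jk(2)]
      smor_component[OF \<psi> c(1) jk(2)] smor_component[OF \<psi> c(2) jk(2)]
      sobj_ver[OF X jk] sobj_ver[OF Y jk] sobj_ver[OF W jk]
    have "vComp C (vComp C (\<psi> (Suc j) k) (\<phi> (Suc j) k)) (Av j k)
        = vComp C (\<psi> (Suc j) k) (vComp C (Bv j k) (\<phi> j k))"
      using v_assoc arrs smor_ver_comm[OF \<phi> jk] by metis
    also have "\<dots> = vComp C (vComp C (Dv j k) (\<psi> j k)) (\<phi> j k)"
      using v_assoc arrs smor_ver_comm[OF \<psi> jk] by metis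
    also have "\<dots> = vComp C (Dv j k) (vComp C (\<psi> j k) (\<phi> j k))"
      using v_assoc arrs by metis
    finally show ?thesis .
  qed
  moreover have "vComp C (\<psi> j k) (\<phi> j k) \<in> vArr C \<and> vDom C (vComp C (\<psi> j k) (\<phi> j k)) = A j k \<and>
      vCod C (vComp C (\<psi> j k) (\<phi> j k)) = D j k \<and> vweq C Z (vComp C (\<psi> j k) (\<phi> j k))"
    if "j \<le> k" "k \<le> n" for j k
    using smor_component[OF \<phi> that] smor_component[OF \<psi> that] v_comp vweq_comp by metis
  moreover have "Sq C (Ah j k) (vComp C (\<psi> j k) (\<phi> j k)) (vComp C (\<psi> j (Suc k)) (\<phi> j (Suc k))) (Dh j k)"
    if "j \<le> k" "k < n" for j k
    using sq_vpaste[OF smor_hor_sq[OF \<phi> that] smor_hor_sq[OF \<psi> that]] .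
  ultimately show ?thesis
    unfolding eX eW is_smor_def by simp
qed

lemma smor_comp_vId:
  assumes "is_smor C Z n X Y \<phi>"
  shows "(\<lambda>j k. if j \<le> k \<and> k \<le> n then vComp C (\<phi> j k)
      (if j \<le> k \<and> k \<le> n then vId C (fst X j k) else undefined) else undefined) = \<phi>"
    and "(\<lambda>j k. if j \<le> k \<and> k \<le> n then vComp C
      (if j \<le> k \<and> k \<le> n then vId C (fst Y j k) else undefined) (\<phi> j k) else undefined) = \<phi>"
proof -
  obtain A Ah Av B Bh Bv where e: "X = (A, Ah, Av)" "Y = (B, Bh, Bv)" by (cases X, cases Y)
  note \<phi> = assms[unfolded e]
  show "(\<lambda>j k. if j \<le> k \<and> k \<le> n then vComp C (\<phi> j k)
      (if j \<le> k \<and> k \<le> n then vId C (fst X j k) else undefined) else undefined) = \<phi>"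
    and "(\<lambda>j k. if j \<le> k \<and> k \<le> n then vComp C
      (if j \<le> k \<and> k \<le> n then vId C (fst Y j k) else undefined) (\<phi> j k) else undefined) = \<phi>"
    unfolding e using smor_component[OF \<phi>] smor_undefined[OF \<phi>] v_comp_id_left v_comp_id_right
    by (auto simp: fun_eq_iff) metis+
qed

lemma smor_vComp_assoc:
  assumes "is_smor C Z n X Y \<phi>" "is_smor C Z n Y W \<psi>" "is_smor C Z n W V \<chi>"
  shows "(\<lambda>j k. if j \<le> k \<and> k \<le> n then vComp C (\<chi> j k)
      (if j \<le> k \<and> k \<le> n then vComp C (\<psi> j k) (\<phi> j k) else undefined) else undefined) =
    (\<lambda>j k. if j \<le> k \<and> k \<le> n then vComp C
      (if j \<le> k \<and> k \<le> n then vComp C (\<chi> j k) (\<psi> j k) else undefined) (\<phi> j k) else undefined)"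
proof -
  have "vComp C (\<chi> j k) (vComp C (\<psi> j k) (\<phi> j k)) = vComp C (vComp C (\<chi> j k) (\<psi> j k)) (\<phi> j k)"
    if "j \<le> k" "k \<le> n" for j k
    using assms v_assoc smor_component[OF _ that] by (metis prod.exhaust)
  then show ?thesis by (auto simp: fun_eq_iff)
qed

lemma is_category_SCat: "is_category (SCat C Z n)"
  by (rule is_category_of_families[where P = "is_sobj C Z n" and M = "is_smor C Z n"
        and I = "\<lambda>X j k. if j \<le> k \<and> k \<le> n then vId C (fst X j k) else undefined"
        and Comp = "\<lambda>\<psi> \<phi> j k. if j \<le> k \<and> k \<le> n then vComp C (\<psi> j k) (\<phi> j k) else undefined"])
    (auto simp: SCat_def intro: smor_vId smor_vComp smor_comp_vId smor_vComp_assoc)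

lemma hmor_vId:
  assumes X: "is_hobj C Z n X"
  shows "is_hmor C Z n X X (\<lambda>i. if i \<le> n then vId C (fst X i) else undefined)"
proof -
  obtain A a where e: "X = (A, a)" by (cases X)
  note X = X[unfolded e]
  have "vweq C Z (vId C (A i)) \<and> vDom C (vId C (A i)) = A i \<and> vCod C (vId C (A i)) = A i" if "i \<le> n" for i
    using v_id vweq_vId hobj_obj[OF X that] by simp
  moreover have "Sq C (a i) (vId C (A i)) (vId C (A (Suc i))) (a i)" if "i < n" for i
    using sq_vId hobj_hor[OF X that] by metis
  ultimately show ?thesis
    unfolding e is_hmor_def using hobj_start[OF X] by simp
qed

lemma hmor_vComp:
  assumes \<phi>: "is_hmor C Z n (A, a) (B, b) \<phi>" and \<psi>: "is_hmor C Z n (B, b) (D, d) \<psi>"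
  shows "is_hmor C Z n (A, a) (D, d) (\<lambda>i. if i \<le> n then vComp C (\<psi> i) (\<phi> i) else undefined)"
proof -
  have "vweq C Z (vComp C (\<psi> i) (\<phi> i)) \<and> vDom C (vComp C (\<psi> i) (\<phi> i)) = A i \<and>
      vCod C (vComp C (\<psi> i) (\<phi> i)) = D i" if "i \<le> n" for i
    using hmor_component[OF \<phi> that] hmor_component[OF \<psi> that] v_comp vweq_comp
    unfolding vweq_def by metis
  moreover have "vComp C (\<psi> 0) (\<phi> 0) = vId C Z"
    using hmor_start[OF \<phi>] hmor_start[OF \<psi>] v_comp_id_left v_id Z_obj by metis
  moreover have "Sq C (a i) (vComp C (\<psi> i) (\<phi> i)) (vComp C (\<psi> (Suc i)) (\<phi> (Suc i))) (d i)" if "i < n" for i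
    using sq_vpaste[OF hmor_sq[OF \<phi> that] hmor_sq[OF \<psi> that]] .
  ultimately show ?thesis
    unfolding is_hmor_def by simp
qed

lemma hmor_comp_vId:
  assumes "is_hmor C Z n X Y \<phi>"
  shows "(\<lambda>i. if i \<le> n then vComp C (\<phi> i) (if i \<le> n then vId C (fst X i) else undefined) else undefined) = \<phi>"
    and "(\<lambda>i. if i \<le> n then vComp C (if i \<le> n then vId C (fst Y i) else undefined) (\<phi> i) else undefined) = \<phi>"
proof -
  obtain A a B b where e: "X = (A, a)" "Y = (B, b)" by (cases X, cases Y)
  note \<phi> = assms[unfolded e]
  show "(\<lambda>i. if i \<le> n then vComp C (\<phi> i) (if i \<le> n then vId C (fst X i) else undefined) else undefined) = \<phi>"
    and "(\<lambda>i. if i \<le> n then vComp C (if i \<le> n then vId C (fst Y i) else undefined) (\<phi> i) else undefined) = \<phi>"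
    unfolding e using hmor_component[OF \<phi>] hmor_undefined[OF \<phi>] v_comp_id_left v_comp_id_right
    unfolding vweq_def by (auto simp: fun_eq_iff) metis+
qed

lemma hmor_vComp_assoc:
  assumes "is_hmor C Z n X Y \<phi>" "is_hmor C Z n Y W \<psi>" "is_hmor C Z n W V \<chi>"
  shows "(\<lambda>i. if i \<le> n then vComp C (\<chi> i) (if i \<le> n then vComp C (\<psi> i) (\<phi> i) else undefined) else undefined) =
    (\<lambda>i. if i \<le> n then vComp C (if i \<le> n then vComp C (\<chi> i) (\<psi> i) else undefined) (\<phi> i) else undefined)"
proof -
  have "vComp C (\<chi> i) (vComp C (\<psi> i) (\<phi> i)) = vComp C (vComp C (\<chi> i) (\<psi> i)) (\<phi> i)" if "i \<le> n" for i
    using assms v_assoc hmor_component[OF _ that] unfolding vweq_def by (metis prod.exhaust)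
  then show ?thesis by (auto simp: fun_eq_iff)
qed

lemma is_category_HCat: "is_category (HCat C Z n)"
  by (rule is_category_of_families[where P = "is_hobj C Z n" and M = "is_hmor C Z n"
        and I = "\<lambda>X i. if i \<le> n then vId C (fst X i) else undefined"
        and Comp = "\<lambda>\<psi> \<phi> i. if i \<le> n then vComp C (\<psi> i) (\<phi> i) else undefined"])
    (auto simp: HCat_def intro: hmor_vId hmor_vComp hmor_comp_vId hmor_vComp_assoc)

end

lemma (in squares_cat) is_functor_U: "is_functor (SCat C Z n) (HCat C Z n) (U_functor n)"
proof -
  have obj: "is_hobj C Z n (U_obj n X)" if "is_sobj C Z n X" for X
    using that unfolding is_sobj_def is_hobj_def U_obj_def by (cases X) auto
  have arr: "is_hmor C Z n (U_obj n X) (U_obj n Y) (\<lambda>i. if i \<le> n then \<phi> 0 i else undefined)"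
    if X: "is_sobj C Z n X" and Y: "is_sobj C Z n Y" and \<phi>: "is_smor C Z n X Y \<phi>" for X Y \<phi>
  proof -
    obtain A Ah Av B Bh Bv where e: "X = (A, Ah, Av)" "Y = (B, Bh, Bv)" by (cases X, cases Y)
    note X = X[unfolded e] and Y = Y[unfolded e] and \<phi> = \<phi>[unfolded e]
    have "\<phi> 0 0 = vId C Z"
      using vterm_unique smor_component[OF \<phi>, of 0 0] sobj_diag[OF X, of 0] sobj_diag[OF Y, of 0] v_id[OF Z_obj]
      by simp
    then show ?thesis
      unfolding e is_hmor_def U_obj_def using smor_component[OF \<phi>] smor_hor_sq[OF \<phi>] by simp
  qed
  show ?thesis
    unfolding is_functor_def U_functor_def
    using obj arr by (auto simp: SCat_def HCat_def U_arr_def U_obj_def fun_eq_iff split: prod.splits)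
qed

section \<open>\<open>U\<^sub>n\<close> is fully faithful\<close>

definition unit_cell :: "('o, 'h, 'v) sobj \<Rightarrow> nat \<Rightarrow> nat \<Rightarrow> 'h \<times> 'v \<times> 'v \<times> 'h" where
  "unit_cell X j k = (case X of (A, Ah, Av) \<Rightarrow> (Ah j k, Av j k, Av j (Suc k), Ah (Suc j) k))"

lemma (in flat_double) unit_cell_sqMor:
  assumes "is_sobj C Z n X" "is_sobj C Z n Y" "is_smor C Z n X Y \<phi>" "j < k" "k < n"
  shows "sqMor C (unit_cell X j k) (unit_cell Y j k) (\<phi> j k, \<phi> j (Suc k), \<phi> (Suc j) k, \<phi> (Suc j) (Suc k))"
proof -
  obtain A Ah Av B Bh Bv where e: "X = (A, Ah, Av)" "Y = (B, Bh, Bv)" by (cases X, cases Y)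
  note X = assms(1)[unfolded e] and Y = assms(2)[unfolded e] and \<phi> = assms(3)[unfolded e]
  have "Suc j \<le> k" "j \<le> Suc k" "Suc k \<le> n" "Suc j \<le> Suc k" "j \<le> k" "k \<le> n" "j < Suc k"
    using assms(4,5) by auto
  then show ?thesis
    unfolding e unit_cell_def sqMor_def
    using sobj_hor[OF X] sobj_hor[OF Y] smor_component[OF \<phi>] smor_hor_sq[OF \<phi>] smor_ver_comm[OF \<phi>]
    by simp
qed

context isostable_squares
begin

lemma smor_eq_if_top_row_eq:
  assumes X: "is_sobj C Z n X" and Y: "is_sobj C Z n Y"
    and \<phi>: "is_smor C Z n X Y \<phi>" and \<psi>: "is_smor C Z n X Y \<psi>" and top: "\<forall>k\<le>n. \<phi> 0 k = \<psi> 0 k"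
  shows "\<phi> = \<psi>"
proof -
  obtain A Ah Av B Bh Bv where e: "X = (A, Ah, Av)" "Y = (B, Bh, Bv)" by (cases X, cases Y)
  note X' = X[unfolded e] and Y' = Y[unfolded e] and \<phi>' = \<phi>[unfolded e] and \<psi>' = \<psi>[unfolded e]
  have "\<phi> j k = \<psi> j k" if "j \<le> k" "k \<le> n" for j k
    using that
  proof (induction "j + k" arbitrary: j k rule: less_induct)
    case less
    consider "j = 0" | "j = k" | j' k' where "j = Suc j'" "k = Suc k'" "j' < k'"
      using less.prems by (cases j; cases k) (auto simp: le_less)
    then show ?case
    proof cases
      case 1
      then show ?thesis using top less.prems by simp
    next
      case 2
      then show ?thesis
        using vterm_unique smor_component[OF \<phi>'] smor_component[OF \<psi>'] sobj_diag[OF Y'] less.prems by simp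
    next
      case 3
      (* a square morphism is determined by its span part, i.e. by the corners above and to the left *)
      then have jk: "j' < k'" "k' < n" using less.prems by auto
      have "\<phi> j' k' = \<psi> j' k'" "\<phi> j' k = \<psi> j' k" "\<phi> j k' = \<psi> j k'"
        using less 3 by simp_all
      then have "sqMor C (unit_cell X j' k') (unit_cell Y j' k') (\<psi> j' k', \<psi> j' k, \<psi> j k', \<phi> j k)"
        using unit_cell_sqMor[OF X Y \<phi> jk] 3 by simp
      moreover have "sqMor C (unit_cell X j' k') (unit_cell Y j' k') (\<psi> j' k', \<psi> j' k, \<psi> j k', \<psi> j k)"
        using unit_cell_sqMor[OF X Y \<psi> jk] 3 by simp
      moreover have "Sq C (Ah j' k') (Av j' k') (Av j' (Suc k')) (Ah (Suc j') k')"
        "Sq C (Bh j' k') (Bv j' k') (Bv j' (Suc k')) (Bh (Suc j') k')"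
        using sobj_cell[OF X' jk] sobj_cell[OF Y' jk] .
      ultimately show ?thesis
        using sqMor_completion_unique unfolding e unit_cell_def by simp
    qed
  qed
  then show ?thesis
    using smor_undefined[OF \<phi>'] smor_undefined[OF \<psi>'] by (metis ext)
qed

end

definition sqMor_completion ::
  "('o, 'h, 'v) dblcat \<Rightarrow> 'h \<times> 'v \<times> 'v \<times> 'h \<Rightarrow> 'h \<times> 'v \<times> 'v \<times> 'h \<Rightarrow> 'v \<Rightarrow> 'v \<Rightarrow> 'v \<Rightarrow> 'v" where
  "sqMor_completion C X Y ta tb tc = (THE td. sqMor C X Y (ta, tb, tc, td))"

fun lift_smor :: "('o, 'h, 'v) dblcat \<Rightarrow> 'o \<Rightarrow> ('o, 'h, 'v) sobj \<Rightarrow> ('o, 'h, 'v) sobj \<Rightarrow> (nat \<Rightarrow> 'v)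
    \<Rightarrow> nat \<Rightarrow> nat \<Rightarrow> 'v" where
  "lift_smor C Z X Y \<theta> 0 k = \<theta> k"
| "lift_smor C Z X Y \<theta> (Suc j) 0 = undefined"
| "lift_smor C Z X Y \<theta> (Suc j) (Suc k) = (if k = j then vId C Z else
     sqMor_completion C (unit_cell X j k) (unit_cell Y j k)
       (lift_smor C Z X Y \<theta> j k) (lift_smor C Z X Y \<theta> j (Suc k)) (lift_smor C Z X Y \<theta> (Suc j) k))"

context isostable_squares
begin

lemma unit_cell_completion:
  assumes X: "is_sobj C Z n (A, Ah, Av)" and Y: "is_sobj C Z n (B, Bh, Bv)" and jk: "j < k" "k < n"
    and ta: "ta \<in> vArr C" "vDom C ta = A j k" "vCod C ta = B j k"
    and tb: "tb \<in> vArr C" "vDom C tb = A j (Suc k)" "vCod C tb = B j (Suc k)"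
    and tc: "tc \<in> vArr C" "vDom C tc = A (Suc j) k" "vCod C tc = B (Suc j) k" "vweq C Z tc"
    and top: "Sq C (Ah j k) ta tb (Bh j k)" and left: "vComp C tc (Av j k) = vComp C (Bv j k) ta"
  defines "td \<equiv> sqMor_completion C (unit_cell (A, Ah, Av) j k) (unit_cell (B, Bh, Bv) j k) ta tb tc"
  shows "td \<in> vArr C \<and> vDom C td = A (Suc j) (Suc k) \<and> vCod C td = B (Suc j) (Suc k) \<and> vweq C Z td \<and>
    Sq C (Ah (Suc j) k) tc td (Bh (Suc j) k) \<and> vComp C td (Av j (Suc k)) = vComp C (Bv j (Suc k)) tb"
proof -
  note cells = sobj_cell[OF X jk] sobj_cell[OF Y jk]
  have "spanMor C (Ah j k, Av j k) (Bh j k, Bv j k) (ta, tb, tc)"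
    using ta tb tc top left jk sobj_hor[OF X] sobj_hor[OF Y] sobj_ver[OF X] sobj_ver[OF Y]
    unfolding spanMor_def by simp
  then have "sqMor C (unit_cell (A, Ah, Av) j k) (unit_cell (B, Bh, Bv) j k) (ta, tb, tc, td)"
    unfolding td_def sqMor_completion_def unit_cell_def
    using theI'[OF sqMor_completion_ex1[OF cells]] by simp
  then have "td \<in> vArr C" "Sq C (Ah (Suc j) k) tc td (Bh (Suc j) k)"
    "vComp C td (Av j (Suc k)) = vComp C (Bv j (Suc k)) tb"
    "vDom C td = hCod C (Ah (Suc j) k)" "vCod C td = hCod C (Bh (Suc j) k)"
    unfolding unit_cell_def sqMor_def by auto
  moreover have "vweq C Z td" using vweq_sq_right tc(4) calculation(2) by blast
  ultimately show ?thesis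
    using sobj_hor[OF X] sobj_hor[OF Y] jk by simp
qed

lemma is_smor_lift_smor:
  assumes X: "is_sobj C Z n X" and Y: "is_sobj C Z n Y"
    and \<theta>: "is_hmor C Z n (U_obj n X) (U_obj n Y) \<theta>"
  shows "is_smor C Z n X Y (\<lambda>j k. if j \<le> k \<and> k \<le> n then lift_smor C Z X Y \<theta> j k else undefined)"
proof -
  obtain A Ah Av B Bh Bv where e: "X = (A, Ah, Av)" "Y = (B, Bh, Bv)" by (cases X, cases Y)
  note X' = X[unfolded e] and Y' = Y[unfolded e]
  have \<theta>': "is_hmor C Z n (\<lambda>i. if i \<le> n then A 0 i else undefined, \<lambda>i. if i < n then Ah 0 i else undefined)
      (\<lambda>i. if i \<le> n then B 0 i else undefined, \<lambda>i. if i < n then Bh 0 i else undefined) \<theta>"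
    using \<theta> unfolding e U_obj_def by simp
  define \<phi> where "\<phi> = lift_smor C Z X Y \<theta>"
  define good where "good j k \<longleftrightarrow>
    \<phi> j k \<in> vArr C \<and> vDom C (\<phi> j k) = A j k \<and> vCod C (\<phi> j k) = B j k \<and> vweq C Z (\<phi> j k)" for j k
  define hor where "hor j k \<longleftrightarrow> Sq C (Ah j k) (\<phi> j k) (\<phi> j (Suc k)) (Bh j k)" for j k
  define ver where "ver j k \<longleftrightarrow> vComp C (\<phi> (Suc j) k) (Av j k) = vComp C (Bv j k) (\<phi> j k)" for j k
  (* corner (j, k) is responsible for the edge to its left and the edge above it *)
  have inv: "good j k \<and> (j < k \<longrightarrow> hor j (k - 1)) \<and> (0 < j \<longrightarrow> ver (j - 1) k)" if "j \<le> k" "k \<le> n" for j k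
    using that
  proof (induction "j + k" arbitrary: j k rule: less_induct)
    case less
    consider "j = 0" | j' where "j = Suc j'" "k = Suc j'" | j' k' where "j = Suc j'" "k = Suc k'" "j' < k'"
      using less.prems by (cases j; cases k) (auto simp: le_less)
    then show ?case
    proof cases
      case 1
      then show ?thesis
        using less.prems hmor_component[OF \<theta>'] hmor_sq[OF \<theta>', of "k - 1"]
        unfolding good_def hor_def \<phi>_def by (auto dest: vweq_arr)
    next
      case (2 j')
      have "good j' k" using less 2 by simp
      then have "ver j' k"
        unfolding ver_def good_def \<phi>_def
        using 2 less.prems vterm_unique v_comp v_id[OF Z_obj] sobj_ver[OF X', of j' k] sobj_ver[OF Y', of j' k]
          sobj_diag[OF X'] sobj_diag[OF Y'] by simp
      then show ?thesis
        using 2 less.prems v_id[OF Z_obj] vweq_vId[OF Z_obj] sobj_diag[OF X'] sobj_diag[OF Y']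
        unfolding good_def \<phi>_def by simp
    next
      case (3 j' k')
      have jk: "j' < k'" "k' < n" using 3 less.prems by auto
      have "good j' k'" "good j' k" "hor j' k'" "good j k'" "ver j' k'"
        using less.hyps[of j' k'] less.hyps[of j' k] less.hyps[of j k'] 3 jk by simp_all
      then have "good j k \<and> hor j k' \<and> ver j' k"
        using unit_cell_completion[OF X' Y' jk, of "\<phi> j' k'" "\<phi> j' k" "\<phi> j k'"] 3
        unfolding good_def hor_def ver_def \<phi>_def e by simp
      then show ?thesis using 3 by simp
    qed
  qed
  have "\<forall>j k. j \<le> k \<and> k \<le> n \<longrightarrow> good j k" "\<forall>j k. j \<le> k \<and> k < n \<longrightarrow> hor j k"
    "\<forall>j k. j < k \<and> k \<le> n \<longrightarrow> ver j k"
    using inv inv[of _ "Suc _"] inv[of "Suc _"] by auto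
  then show ?thesis
    unfolding e is_smor_def good_def hor_def ver_def \<phi>_def by simp
qed

lemma faithful_U: "faithful_functor (SCat C Z n) (U_functor n)"
  unfolding faithful_functor_def
proof (intro ballI impI)
  fix f f' assume f: "f \<in> cArr (SCat C Z n)" "f' \<in> cArr (SCat C Z n)"
    and dom: "cDom (SCat C Z n) f = cDom (SCat C Z n) f'" and cod: "cCod (SCat C Z n) f = cCod (SCat C Z n) f'"
    and U: "snd (U_functor n) f = snd (U_functor n) f'"
  obtain X Y \<phi> X' Y' \<psi> where e: "f = (X, Y, \<phi>)" "f' = (X', Y', \<psi>)"
    by (metis prod_cases3)
  then have "X' = X" "Y' = Y"
    using dom cod unfolding SCat_def by simp_all
  have "(\<lambda>i. if i \<le> n then \<phi> 0 i else undefined) = (\<lambda>i. if i \<le> n then \<psi> 0 i else undefined)"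
    using U unfolding e U_functor_def U_arr_def by simp
  then have top: "\<forall>k\<le>n. \<phi> 0 k = \<psi> 0 k"
    by (simp add: fun_eq_iff) (metis)
  have "is_sobj C Z n X" "is_sobj C Z n Y" "is_smor C Z n X Y \<phi>" "is_smor C Z n X Y \<psi>"
    using f unfolding e \<open>X' = X\<close> \<open>Y' = Y\<close> SCat_def by simp_all
  then show "f = f'"
    using smor_eq_if_top_row_eq top unfolding e \<open>X' = X\<close> \<open>Y' = Y\<close> by simp
qed

lemma full_U: "full_functor (SCat C Z n) (HCat C Z n) (U_functor n)"
  unfolding full_functor_def
proof (intro ballI impI)
  fix X Y g assume X: "X \<in> cObj (SCat C Z n)" and Y: "Y \<in> cObj (SCat C Z n)" and g: "g \<in> cArr (HCat C Z n)"
    and dom: "cDom (HCat C Z n) g = fst (U_functor n) X" and cod: "cCod (HCat C Z n) g = fst (U_functor n) Y"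
  obtain \<theta> where e: "g = (U_obj n X, U_obj n Y, \<theta>)" and \<theta>: "is_hmor C Z n (U_obj n X) (U_obj n Y) \<theta>"
    using g dom cod unfolding HCat_def U_functor_def by auto
  define \<phi> where "\<phi> = (\<lambda>j k. if j \<le> k \<and> k \<le> n then lift_smor C Z X Y \<theta> j k else undefined)"
  have "is_smor C Z n X Y \<phi>"
    unfolding \<phi>_def using is_smor_lift_smor X Y \<theta> unfolding SCat_def by simp
  moreover have "\<theta> i = undefined" if "\<not> i \<le> n" for i
    using hmor_undefined \<theta> that by (metis prod.exhaust)
  then have "(\<lambda>i. if i \<le> n then \<phi> 0 i else undefined) = \<theta>"
    unfolding \<phi>_def by (auto simp: fun_eq_iff)
  ultimately show "\<exists>f\<in>cArr (SCat C Z n). cDom (SCat C Z n) f = X \<and> cCod (SCat C Z n) f = Y \<and> snd (U_functor n) f = g"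
    using X Y unfolding e SCat_def U_functor_def U_arr_def by (intro bexI[of _ "(X, Y, \<phi>)"]) auto
qed

end

section \<open>\<open>U\<^sub>n\<close> is surjective on objects\<close>

definition sq_right :: "'h \<times> 'v \<times> 'v \<times> 'h \<Rightarrow> 'v" where
  "sq_right X = (case X of (f, g, h, k) \<Rightarrow> h)"

definition sq_bottom :: "'h \<times> 'v \<times> 'v \<times> 'h \<Rightarrow> 'h" where
  "sq_bottom X = (case X of (f, g, h, k) \<Rightarrow> k)"

text \<open>The unit square at \<open>(j, k)\<close> fills the span formed by the bottom of the square above it
  (\<open>a k\<close> in row \<open>0\<close>) and the right side of the square to its left (the arrow to \<open>O\<close> next to the
  diagonal).\<close>

fun staircase :: "('o, 'h, 'v) dblcat \<Rightarrow> 'o \<Rightarrow> ('h \<times> 'v \<Rightarrow> 'h \<times> 'v \<times> 'v \<times> 'h) \<Rightarrow> (nat \<Rightarrow> 'h)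
    \<Rightarrow> nat \<Rightarrow> nat \<Rightarrow> 'h \<times> 'v \<times> 'v \<times> 'h" where
  "staircase C Z S a j k =
    (if k \<le> j then undefined else
     let top = (case j of 0 \<Rightarrow> a k | Suc i \<Rightarrow> sq_bottom (staircase C Z S a i k));
         left = (if k = Suc j then vterm C Z (hDom C top) else sq_right (staircase C Z S a j (k - 1)))
     in S (top, left))"

declare staircase.simps [simp del]

definition staircase_Ah :: "('o, 'h, 'v) dblcat \<Rightarrow> 'o \<Rightarrow> ('h \<times> 'v \<Rightarrow> 'h \<times> 'v \<times> 'v \<times> 'h) \<Rightarrow> nat
    \<Rightarrow> (nat \<Rightarrow> 'h) \<Rightarrow> nat \<Rightarrow> nat \<Rightarrow> 'h" where
  "staircase_Ah C Z S n a j k = (if j \<le> k \<and> k < n then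
     (case j of 0 \<Rightarrow> a k | Suc i \<Rightarrow> sq_bottom (staircase C Z S a i k)) else undefined)"

definition staircase_A :: "('o, 'h, 'v) dblcat \<Rightarrow> 'o \<Rightarrow> ('h \<times> 'v \<Rightarrow> 'h \<times> 'v \<times> 'v \<times> 'h) \<Rightarrow> nat
    \<Rightarrow> (nat \<Rightarrow> 'o) \<Rightarrow> (nat \<Rightarrow> 'h) \<Rightarrow> nat \<Rightarrow> nat \<Rightarrow> 'o" where
  "staircase_A C Z S n A a j k = (if j \<le> k \<and> k \<le> n then
     (if j = k then Z else if j = 0 then A k else hCod C (staircase_Ah C Z S n a j (k - 1))) else undefined)"

definition staircase_Av :: "('o, 'h, 'v) dblcat \<Rightarrow> 'o \<Rightarrow> ('h \<times> 'v \<Rightarrow> 'h \<times> 'v \<times> 'v \<times> 'h) \<Rightarrow> nat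
    \<Rightarrow> (nat \<Rightarrow> 'o) \<Rightarrow> (nat \<Rightarrow> 'h) \<Rightarrow> nat \<Rightarrow> nat \<Rightarrow> 'v" where
  "staircase_Av C Z S n A a j k = (if j < k \<and> k \<le> n then
     (if k = Suc j then vterm C Z (staircase_A C Z S n A a j k) else sq_right (staircase C Z S a j (k - 1)))
     else undefined)"

lemma staircase_eq:
  "j < k \<Longrightarrow> k < n \<Longrightarrow>
    staircase C Z S a j k = S (staircase_Ah C Z S n a j k,
      if k = Suc j then vterm C Z (hDom C (staircase_Ah C Z S n a j k)) else sq_right (staircase C Z S a j (k - 1)))"
  by (subst staircase.simps) (auto simp: staircase_Ah_def Let_def)

locale staircase_filling = isostable_squares C Z s w
  for C :: "('o, 'h, 'v) dblcat" and Z s w +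
  fixes n :: nat and A :: "nat \<Rightarrow> 'o" and a :: "nat \<Rightarrow> 'h"
  assumes top_row: "is_hobj C Z n (A, a)"
begin

abbreviation A' where "A' \<equiv> staircase_A C Z (fst s) n A a"
abbreviation Ah' where "Ah' \<equiv> staircase_Ah C Z (fst s) n a"
abbreviation Av' where "Av' \<equiv> staircase_Av C Z (fst s) n A a"

lemma staircase_A_Suc: "0 < j \<Longrightarrow> j \<le> k \<Longrightarrow> k < n \<Longrightarrow> hCod C (Ah' j k) = A' j (Suc k)"
  unfolding staircase_A_def by simp

lemma staircase_cell:
  assumes "j < k" "k < n"
  shows "staircase C Z (fst s) a j k = (Ah' j k, Av' j k, Av' j (Suc k), Ah' (Suc j) k) \<and>
    Sq C (Ah' j k) (Av' j k) (Av' j (Suc k)) (Ah' (Suc j) k) \<and>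
    hDom C (Ah' j k) = A' j k \<and> hCod C (Ah' j k) = A' j (Suc k) \<and> vCod C (Av' j k) = A' (Suc j) k"
  using assms
proof (induction "j + k" arbitrary: j k rule: less_induct)
  case less
  have top: "Ah' j k \<in> hArr C \<and> hDom C (Ah' j k) = A' j k \<and> hCod C (Ah' j k) = A' j (Suc k)"
  proof (cases j)
    case 0
    then show ?thesis
      using hobj_hor[OF top_row] less.prems unfolding staircase_Ah_def staircase_A_def by simp
  next
    case (Suc i)
    then have sq: "Sq C (Ah' i k) (Av' i k) (Av' i (Suc k)) (Ah' j k)" and "vCod C (Av' i k) = A' j k"
      using less by auto
    then have "Ah' j k \<in> hArr C" "hDom C (Ah' j k) = A' j k"
      using sq_boundary[OF sq] by simp_all
    then show ?thesis
      using staircase_A_Suc less.prems Suc by simp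
  qed
  have left: "Av' j k \<in> vArr C \<and> vDom C (Av' j k) = A' j k \<and> vCod C (Av' j k) = A' (Suc j) k"
  proof (cases "k = Suc j")
    case True
    have "A' j k \<in> dObj C" using top h_dom_cod by metis
    moreover have "Av' j k = vterm C Z (A' j k)" "A' (Suc j) k = Z"
      using True less.prems unfolding staircase_Av_def staircase_A_def by simp_all
    ultimately show ?thesis using vterm by simp
  next
    case False
    then obtain k' where k': "k = Suc k'" "j < k'" using less.prems by (cases k) auto
    then have "Sq C (Ah' j k') (Av' j k') (Av' j k) (Ah' (Suc j) k')" "hCod C (Ah' j k') = A' j k"
      using less by auto
    moreover have "hCod C (Ah' (Suc j) k') = A' (Suc j) k"
      using k' less.prems staircase_A_Suc by simp
    ultimately show ?thesis
      using sq_boundary by metis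
  qed
  obtain r b where rb: "fst s (Ah' j k, Av' j k) = (Ah' j k, Av' j k, r, b)" "Sq C (Ah' j k) (Av' j k) r b"
    using filler_square top left by metis
  have Av'_eq: "Av' j k = (if k = Suc j then vterm C Z (hDom C (Ah' j k))
      else sq_right (staircase C Z (fst s) a j (k - 1)))"
    using top less.prems unfolding staircase_Av_def by auto
  have "staircase C Z (fst s) a j k = fst s (Ah' j k, Av' j k)"
    using staircase_eq[OF less.prems, of C Z "fst s" a] unfolding Av'_eq[symmetric] .
  moreover have "r = Av' j (Suc k)" "b = Ah' (Suc j) k"
    using calculation rb less.prems unfolding staircase_Av_def staircase_Ah_def sq_right_def sq_bottom_def
    by auto
  ultimately show ?case using rb top left by simp
qed

lemma staircase_Ah_arr:
  assumes "j \<le> k" "k < n"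
  shows "Ah' j k \<in> hArr C \<and> hDom C (Ah' j k) = A' j k \<and> hCod C (Ah' j k) = A' j (Suc k)"
proof (cases j)
  case 0
  then show ?thesis
    using assms hobj_hor[OF top_row] hobj_start[OF top_row] unfolding staircase_A_def staircase_Ah_def by auto
next
  case (Suc i)
  then have sq: "Sq C (Ah' i k) (Av' i k) (Av' i (Suc k)) (Ah' j k)" and "vCod C (Av' i k) = A' j k"
    using staircase_cell[of i k] assms by auto
  then have "Ah' j k \<in> hArr C" "hDom C (Ah' j k) = A' j k"
    using sq_boundary[OF sq] by simp_all
  then show ?thesis using staircase_A_Suc assms Suc by simp
qed

lemma staircase_Av_arr:
  assumes "j < k" "k \<le> n"
  shows "Av' j k \<in> vArr C \<and> vDom C (Av' j k) = A' j k \<and> vCod C (Av' j k) = A' (Suc j) k"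
proof (cases "k = Suc j")
  case True
  have "A' j k \<in> dObj C" using staircase_Ah_arr[of j j] h_dom_cod assms True by (metis le_refl less_eq_Suc_le)
  moreover have "Av' j k = vterm C Z (A' j k)" "A' (Suc j) k = Z"
    using True assms unfolding staircase_Av_def staircase_A_def by simp_all
  ultimately show ?thesis using vterm by simp
next
  case False
  then obtain k' where k': "k = Suc k'" "j < k'" using assms by (cases k) auto
  then have sq: "Sq C (Ah' j k') (Av' j k') (Av' j k) (Ah' (Suc j) k')"
    using staircase_cell[of j k'] assms by auto
  have "hCod C (Ah' j k') = A' j k" "hCod C (Ah' (Suc j) k') = A' (Suc j) k"
    using staircase_Ah_arr[of j k'] staircase_A_Suc[of "Suc j" k'] k' assms by simp_all
  then show ?thesis using sq_boundary[OF sq] by simp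
qed

lemma staircase_A_obj:
  assumes "j \<le> k" "k \<le> n"
  shows "A' j k \<in> dObj C"
proof (cases "j = k")
  case True
  then show ?thesis using assms Z_obj unfolding staircase_A_def by simp
next
  case False
  then show ?thesis using staircase_Av_arr[of j k] v_dom_cod assms by (metis le_neq_implies_less)
qed

lemma is_sobj_staircase: "is_sobj C Z n (A', Ah', Av')"
  unfolding is_sobj_def using staircase_A_obj staircase_Ah_arr staircase_Av_arr staircase_cell
  by (auto simp: staircase_A_def staircase_Ah_def staircase_Av_def)

lemma U_obj_staircase: "U_obj n (A', Ah', Av') = (A, a)"
  unfolding U_obj_def staircase_A_def staircase_Ah_def
  using hobj_start[OF top_row] hobj_undefined[OF top_row] by (auto simp: fun_eq_iff)

end

context isostable_squares
begin

lemma surjective_U: "\<forall>Y\<in>cObj (HCat C Z n). \<exists>X\<in>cObj (SCat C Z n). fst (U_functor n) X = Y"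
proof
  fix Y assume "Y \<in> cObj (HCat C Z n)"
  then obtain A a where Y: "Y = (A, a)" "is_hobj C Z n (A, a)"
    unfolding HCat_def by (cases Y) auto
  interpret staircase_filling C Z s w n A a
    using Y(2) by unfold_locales
  let ?X = "(A', Ah', Av')"
  have "is_sobj C Z n ?X \<and> U_obj n ?X = (A, a)"
    using is_sobj_staircase U_obj_staircase by simp
  then show "\<exists>X\<in>cObj (SCat C Z n). fst (U_functor n) X = Y"
    unfolding SCat_def U_functor_def Y(1) by (intro bexI[of _ ?X]) auto
qed

lemma equivalence_U: "equivalence_of_categories (SCat C Z n) (HCat C Z n) (U_functor n)"
proof -
  interpret fully_faithful_surjective "SCat C Z n" "HCat C Z n" "U_functor n"
    using is_category_SCat is_category_HCat is_functor_U faithful_U full_U surjective_U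
    by unfold_locales
  show ?thesis by (rule equivalence)
qed

end

lemma isostable_squaresE:
  assumes "isostable C Z"
  obtains s w where "isostable_squares C Z s w"
proof -
  obtain s w where stable: "is_functor (FunSpan C) (FunSq C) s"
    "\<forall>X\<in>cObj (FunSpan C). fst istar (fst s X) = X" "\<forall>\<phi>\<in>cArr (FunSpan C). snd istar (snd s \<phi>) = \<phi>"
    "is_nat_trans (FunSq C) (FunSq C) (fcomp s istar) fid w"
    "\<forall>X\<in>cObj (FunSq C). compA (w X) = vId C (cornerA C X) \<and> compB (w X) = vId C (cornerB C X) \<and>
       compC (w X) = vId C (cornerC C X)"
    using assms unfolding isostable_def stable_def by (elim conjE exE) blast
  have "isostable_squares C Z s w"
    using assms stable by (rule isostable_squares.intro)
  then show ?thesis by (rule that)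
qed

theorem lemma3p25:
  fixes C :: "('o, 'h, 'v) dblcat" and Z :: 'o and n :: nat
  assumes "isostable C Z"
  shows "equivalence_of_categories (SCat C Z n) (HCat C Z n) (U_functor n)"
proof -
  obtain s w where "isostable_squares C Z s w"
    using assms by (rule isostable_squaresE)
  then show ?thesis
    by (rule isostable_squares.equivalence_U)
qed

end
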